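(* In the setting described in the context, assume there exists $\bar Z\in\mathbb{R}^{(n+m)\times n}$ with $\begin{bmatrix} I\\ \bar Z\end{bmatrix}^\top N\begin{bmatrix} I\\ \bar Z\end{bmatrix}>0$, and let $\gamma>0$. Then the data $(U_-,X)$ are informative for $\mathcal{H}_2$ control with performance $\gamma$ if and only if there exist symmetric $Y\in\mathbb{R}^{n\times n}$ with $Y>0$, symmetric $Z\in\mathbb{R}^{n\times n}$, $L\in\mathbb{R}^{m\times n}$ and scalars $\alpha\ge0$, $\beta>0$ such that, with $C_{Y,L}:=CY+DL$, $$\begin{bmatrix} Y-\beta I & 0 & 0 & 0 & 0\\ 0 & 0 & 0 & Y & 0\\ 0 & 0 & 0 & L & 0\\ 0 & Y & L^\top & Y & C_{Y,L}^\top\\ 0 & 0 & 0 & C_{Y,L} & I\end{bmatrix}-\alpha\begin{bmatrix} I & X_+\\ 0 & -X_-\\ 0 & -U_-\\ 0 & 0\\ 0 & 0\end{bmatrix}\begin{bmatrix}\Phi_{11} & \Phi_{12}\\ \Phi_{12}^\top & \Phi_{22}\end{bmatrix}\begin{bmatrix} I & X_+\\ 0 & -X_-\\ 0 & -U_-\\ 0 & 0\\ 0 & 0\end{bmatrix}^\top\ge0$$ (block sizes $n,n,m,n,p$), $\begin{bmatrix} Y & C_{Y,L}^\top\\ C_{Y,L} & I\end{bmatrix}>0$, $\begin{bmatrix} Z & I\\ I & Y\end{bmatrix}\ge0$ and $\operatorname{tr} Z<\gamma^2$. Moreover, if $Y,L$ (with some $Z,\alpha,\beta$) satisfy these conditions,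 then $K:=LY^{-1}$ is such that, for all $(A,B)\in\Sigma$, $A+BK$ is Schur stable and the transfer matrix $G(z)=(C+DK)(zI-(A+BK))^{-1}$ satisfies $\|G\|_{\mathcal{H}_2}<\gamma$.
   Context: Consider the system $x(t+1)=A_sx(t)+B_su(t)+w(t)$ with unknown $A_s\in\mathbb{R}^{n\times n}$, $B_s\in\mathbb{R}^{n\times m}$ and unknown noise $w$, and a performance output $z(t)=Cx(t)+Du(t)$ with known $C\in\mathbb{R}^{p\times n}$, $D\in\mathbb{R}^{p\times m}$. Data: $X_+=[x(1)\ \cdots\ x(T)]$, $X_-=[x(0)\ \cdots\ x(T-1)]$, $U_-=[u(0)\ \cdots\ u(T-1)]$, with $X_+=A_sX_-+B_sU_-+W_-$ where $W_-=[w(0)\ \cdots\ w(T-1)]$ satisfies $\begin{bmatrix} I\\ W_-^\top\end{bmatrix}^\top\begin{bmatrix}\Phi_{11} & \Phi_{12}\\ \Phi_{12}^\top & \Phi_{22}\end{bmatrix}\begin{bmatrix} I\\ W_-^\top\end{bmatrix}\ge0$ for known $\Phi_{11}=\Phi_{11}^\top\in\mathbb{R}^{n\times n}$, $\Phi_{12}\in\mathbb{R}^{n\times T}$, $\Phi_{22}=\Phi_{22}^\top\in\mathbb{R}^{T\times T}$, $\Phi_{22}<0$. $\Sigma$ is the set of all $(A,B)$ such that $X_+=AX_-+BU_-+W$ for some $W\in\mathbb{R}^{n\times T}$ satisfying the same noise inequality. $N:=\begin{bmatrix} I & X_+\\ 0 & -X_-\\ 0 & -U_-\end{bmatrix}\begin{bmatrix}\Phi_{11}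 & \Phi_{12}\\ \Phi_{12}^\top & \Phi_{22}\end{bmatrix}\begin{bmatrix} I & X_+\\ 0 & -X_-\\ 0 & -U_-\end{bmatrix}^\top$. The data are informative for $\mathcal{H}_2$ control with performance $\gamma$ if there exist symmetric $P>0$ and $K\in\mathbb{R}^{m\times n}$ such that for all $(A,B)\in\Sigma$: $P>(A+BK)^\top P(A+BK)+(C+DK)^\top(C+DK)$ and $\operatorname{tr}P<\gamma^2$. *)

theory Defs
  imports "HOL-Analysis.Analysis"
begin

text \<open>Matrices are rendered as \<open>real^'c^'r\<close> (rows indexed by 'r, columns by 'c).\<close>

definition hcat :: "real^'b^'a \<Rightarrow> real^'c^'a \<Rightarrow> real^('b + 'c)^'a" where
  "hcat M1 M2 = (\<chi> i j. case j of Inl b \<Rightarrow> M1 $ i $ b | Inr c \<Rightarrow> M2 $ i $ c)"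

definition vcat :: "real^'b^'a \<Rightarrow> real^'b^'c \<Rightarrow> real^'b^('a + 'c)" where
  "vcat M1 M2 = (\<chi> i. case i of Inl a \<Rightarrow> M1 $ a | Inr c \<Rightarrow> M2 $ c)"

definition psd :: "real^'n^'n \<Rightarrow> bool" where
  "psd M \<longleftrightarrow> transpose M = M \<and> (\<forall>x. 0 \<le> x \<bullet> (M *v x))"

definition pd :: "real^'n^'n \<Rightarrow> bool" where
  "pd M \<longleftrightarrow> transpose M = M \<and> (\<forall>x. x \<noteq> 0 \<longrightarrow> 0 < x \<bullet> (M *v x))"

primrec matpow :: "real^'n^'n \<Rightarrow> nat \<Rightarrow> real^'n^'n" where
  "matpow A 0 = mat 1"
| "matpow A (Suc k) = A ** matpow A k"

definition schur_stable :: "real^'n^'n \<Rightarrow> bool" where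
  "schur_stable A \<longleftrightarrow>
     (\<forall>(l::complex) (v::complex^'n). v \<noteq> 0 \<and>
        (\<chi> i j. complex_of_real (A $ i $ j)) *v v = l *s v \<longrightarrow> cmod l < 1)"

text \<open>Squared H2 norm of G(z) = Cc (zI - A)^{-1} = \<Sum>_{k\<ge>0} Cc A^k z^{-(k+1)},
  via its impulse response (Parseval): \<Sum>_k ||Cc A^k||_F^2.\<close>
definition h2_sq_terms :: "real^'n^'n \<Rightarrow> real^'n^'p \<Rightarrow> nat \<Rightarrow> real" where
  "h2_sq_terms A Cc k = trace (transpose (Cc ** matpow A k) ** (Cc ** matpow A k))"

definition h2_norm :: "real^'n^'n \<Rightarrow> real^'n^'p \<Rightarrow> real" where
  "h2_norm A Cc = sqrt (\<Sum>k. h2_sq_terms A Cc k)"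

definition Phi_mat :: "real^'n^'n \<Rightarrow> real^'T^'n \<Rightarrow> real^'T^'T \<Rightarrow> real^('n + 'T)^('n + 'T)" where
  "Phi_mat P11 P12 P22 = vcat (hcat P11 P12) (hcat (transpose P12) P22)"

definition noise_ok :: "real^'n^'n \<Rightarrow> real^'T^'n \<Rightarrow> real^'T^'T \<Rightarrow> real^'T^'n \<Rightarrow> bool" where
  "noise_ok P11 P12 P22 W \<longleftrightarrow>
     psd (transpose (vcat (mat 1) (transpose W)) ** Phi_mat P11 P12 P22 ** vcat (mat 1) (transpose W))"

definition Sigma_set :: "real^'n^'n \<Rightarrow> real^'T^'n \<Rightarrow> real^'T^'T \<Rightarrow>
    real^'T^'n \<Rightarrow> real^'T^'n \<Rightarrow> real^'T^'m \<Rightarrow> ((real^'n^'n) \<times> (real^'m^'n)) set" where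
  "Sigma_set P11 P12 P22 Xp Xm Um =
     {(A, B). \<exists>W. Xp = A ** Xm + B ** Um + W \<and> noise_ok P11 P12 P22 W}"

definition N_data_left :: "real^'T^'n \<Rightarrow> real^'T^'n \<Rightarrow> real^'T^'m \<Rightarrow> real^('n + 'T)^('n + ('n + 'm))" where
  "N_data_left Xp Xm Um = vcat (hcat (mat 1) Xp) (vcat (hcat 0 (- Xm)) (hcat 0 (- Um)))"

definition N_mat :: "real^'n^'n \<Rightarrow> real^'T^'n \<Rightarrow> real^'T^'T \<Rightarrow>
    real^'T^'n \<Rightarrow> real^'T^'n \<Rightarrow> real^'T^'m \<Rightarrow> real^('n + ('n + 'm))^('n + ('n + 'm))" where
  "N_mat P11 P12 P22 Xp Xm Um =
     N_data_left Xp Xm Um ** Phi_mat P11 P12 P22 ** transpose (N_data_left Xp Xm Um)"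

definition informative_H2 :: "real^'n^'n \<Rightarrow> real^'T^'n \<Rightarrow> real^'T^'T \<Rightarrow>
    real^'T^'n \<Rightarrow> real^'T^'n \<Rightarrow> real^'T^'m \<Rightarrow> real^'n^'p \<Rightarrow> real^'m^'p \<Rightarrow> real \<Rightarrow> bool" where
  "informative_H2 P11 P12 P22 Xp Xm Um C D \<gamma> \<longleftrightarrow>
     (\<exists>P K. pd P \<and> trace P < \<gamma>\<^sup>2 \<and>
       (\<forall>(A, B) \<in> Sigma_set P11 P12 P22 Xp Xm Um.
          pd (P - transpose (A + B ** K) ** P ** (A + B ** K)
                 - transpose (C + D ** K) ** (C + D ** K))))"

definition M5 :: "real^'T^'n \<Rightarrow> real^'T^'n \<Rightarrow> real^'T^'m \<Rightarrow>
    real^('n + 'T::finite)^('n::finite + ('n + ('m::finite + ('n + 'p::finite))))" where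
  "M5 Xp Xm Um = vcat (hcat (mat 1) Xp) (vcat (hcat 0 (- Xm)) (vcat (hcat 0 (- Um))
                   (vcat (0 :: real^('n + 'T)^'n) (0 :: real^('n + 'T)^'p))))"

definition LMI_block :: "real^'n^'n \<Rightarrow> real^'n^'m \<Rightarrow> real^'n^'p \<Rightarrow> real^'m^'p \<Rightarrow> real \<Rightarrow>
    real^('n + ('n + ('m + ('n + 'p))))^('n + ('n + ('m + ('n + 'p))))" where
  "LMI_block Y L C D \<beta> =
    (let CYL = C ** Y + D ** L in
     vcat (hcat (Y - \<beta> *\<^sub>R mat 1) (hcat (0::real^'n^'n) (hcat (0::real^'m^'n) (hcat (0::real^'n^'n) (0::real^'p^'n)))))
    (vcat (hcat (0::real^'n^'n) (hcat (0::real^'n^'n) (hcat (0::real^'m^'n) (hcat Y (0::real^'p^'n)))))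
    (vcat (hcat (0::real^'n^'m) (hcat (0::real^'n^'m) (hcat (0::real^'m^'m) (hcat L (0::real^'p^'m)))))
    (vcat (hcat (0::real^'n^'n) (hcat Y (hcat (transpose L) (hcat Y (transpose CYL)))))
          (hcat (0::real^'n^'p) (hcat (0::real^'n^'p) (hcat (0::real^'m^'p) (hcat CYL (mat 1)))))))))"

end

theory Submission
  imports Defs
begin

text \<open>Sufficiency: with \<open>P = Y\<^sup>-\<^sup>1\<close> and \<open>K = L Y\<^sup>-\<^sup>1\<close>, evaluating the LMI at a test vector built
  from a system \<open>(A, B)\<close> consistent with the data makes the noise term nonnegative and leaves the
  Lyapunov inequality \<open>P - (A + B K)\<^sup>T P (A + B K) - (C + D K)\<^sup>T (C + D K) > 0\<close>. Such a certificate
  gives Schur stability and, by telescoping, \<open>\<parallel>G\<parallel>\<^sub>2\<^sup>2 \<le> tr P \<le> tr Z < \<gamma>\<^sup>2\<close>.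

  Necessity: from a common certificate \<open>(P, K)\<close> take \<open>Y = P\<^sup>-\<^sup>1\<close>, \<open>L = K Y\<close>, \<open>Z = P\<close>. Every
  direction \<open>(x, u)\<close> allowed by the quadratic data constraint is realised as \<open>u = (A\<^sup>T x, B\<^sup>T x)\<close> by
  some consistent \<open>(A, B)\<close>, a rank-one correction of a central solution. Hence the LMI with
  \<open>\<alpha> = \<beta> = 0\<close> is positive on the cone where the data multiplier is nonnegative, away from a common
  kernel; compactness turns this into a margin \<open>\<beta> > 0\<close>, and the S-lemma provides the multiplier \<open>\<alpha>\<close>;
  its Slater condition is the assumption that \<open>[I; Z\<^sub>b]\<^sup>T N [I; Z\<^sub>b] > 0\<close> for some \<open>Z\<^sub>b\<close>.\<close>

text \<open>Block computations need \<open>transpose A *v x\<close> to stay a matrix-vector product instead of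
  becoming the row-vector form \<open>x v* A\<close>.\<close>

declare transpose_matrix_vector[simp del] vector_transpose_matrix[simp del]

lemma sum_UNIV_Plus:
  "sum f (UNIV::('a::finite + 'b::finite) set) = sum (\<lambda>i. f (Inl i)) UNIV + sum (\<lambda>i. f (Inr i)) UNIV"
proof -
  have "sum f (UNIV <+> UNIV) = sum (f \<circ> Inl) UNIV + sum (f \<circ> Inr) UNIV"
    by (rule sum.Plus) auto
  thus ?thesis by (simp add: comp_def)
qed

definition vjoin :: "real^'a::finite \<Rightarrow> real^'b::finite \<Rightarrow> real^('a + 'b)" where
  "vjoin a b = (\<chi> i. case i of Inl j \<Rightarrow> a $ j | Inr k \<Rightarrow> b $ k)"

definition vfst :: "real^('a::finite + 'b::finite) \<Rightarrow> real^'a" where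
  "vfst w = (\<chi> j. w $ Inl j)"

definition vsnd :: "real^('a::finite + 'b::finite) \<Rightarrow> real^'b" where
  "vsnd w = (\<chi> j. w $ Inr j)"

lemma vjoin_nth_Inl [simp]: "vjoin a b $ Inl j = a $ j"
  by (simp add: vjoin_def)

lemma vjoin_nth_Inr [simp]: "vjoin a b $ Inr j = b $ j"
  by (simp add: vjoin_def)

lemma vfst_vjoin [simp]: "vfst (vjoin a b) = a"
  by (simp add: vfst_def vec_eq_iff)

lemma vsnd_vjoin [simp]: "vsnd (vjoin a b) = b"
  by (simp add: vsnd_def vec_eq_iff)

lemma vjoin_vfst_vsnd: "vjoin (vfst w) (vsnd w) = w"
  by (simp add: vec_eq_iff vfst_def vsnd_def vjoin_def split: sum.split)

lemma vjoin_eq_iff [simp]: "vjoin a b = vjoin c d \<longleftrightarrow> a = c \<and> b = d"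
  by (metis vfst_vjoin vsnd_vjoin)

lemma vjoin_zero [simp]: "vjoin 0 0 = 0"
  by (simp add: vec_eq_iff vjoin_def split: sum.split)

lemma vjoin_eq_0_iff [simp]: "vjoin a b = 0 \<longleftrightarrow> a = 0 \<and> b = 0"
  by (metis vjoin_eq_iff vjoin_zero)

lemma vjoin_add: "vjoin a b + vjoin c d = vjoin (a + c) (b + d)"
  by (simp add: vec_eq_iff vjoin_def split: sum.split)

lemma vjoin_diff: "vjoin a b - vjoin c d = vjoin (a - c) (b - d)"
  by (simp add: vec_eq_iff vjoin_def split: sum.split)

lemma vjoin_minus: "- vjoin a b = vjoin (- a) (- b)"
  by (simp add: vec_eq_iff vjoin_def split: sum.split)

lemma vjoin_scaleR: "c *\<^sub>R vjoin a b = vjoin (c *\<^sub>R a) (c *\<^sub>R b)"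
  by (simp add: vec_eq_iff vjoin_def split: sum.split)

lemma inner_vjoin [simp]: "vjoin a b \<bullet> vjoin c d = a \<bullet> c + b \<bullet> d"
  by (simp add: inner_vec_def sum_UNIV_Plus)

lemma linear_vfst: "linear vfst"
  by (rule linearI) (simp_all add: vfst_def vec_eq_iff)

lemma norm_vfst_le: "norm (vfst w) \<le> norm w"
proof -
  have "(norm w)\<^sup>2 = (norm (vfst w))\<^sup>2 + (norm (vsnd w))\<^sup>2"
    by (metis inner_vjoin power2_norm_eq_inner vjoin_vfst_vsnd)
  thus ?thesis by (simp add: power2_le_imp_le)
qed

lemma vjoin5_cases:
  obtains x u1 u2 y z where "w = vjoin x (vjoin u1 (vjoin u2 (vjoin y z)))"
  by (metis vjoin_vfst_vsnd)

lemma hcat_mult_vjoin: "hcat M1 M2 *v vjoin a b = M1 *v a + M2 *v b"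
  by (simp add: hcat_def matrix_vector_mult_def vec_eq_iff sum_UNIV_Plus vjoin_def)

lemma vcat_mult: "vcat M1 M2 *v x = vjoin (M1 *v x) (M2 *v x)"
  by (simp add: vcat_def matrix_vector_mult_def vec_eq_iff vjoin_def split: sum.split)

lemma transpose_vcat: "transpose (vcat A B) = hcat (transpose A) (transpose B)"
  by (simp add: transpose_def vcat_def hcat_def vec_eq_iff split: sum.split)

lemma transpose_hcat: "transpose (hcat A B) = vcat (transpose A) (transpose B)"
  by (simp add: transpose_def vcat_def hcat_def vec_eq_iff split: sum.split)

lemma hcat_vcat: "hcat (vcat A B) (vcat C D) = vcat (hcat A C) (hcat B D)"
  by (simp add: hcat_def vcat_def vec_eq_iff split: sum.split)

lemma transpose_add: "transpose (A + B) = transpose A + transpose (B::real^'n^'m)"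
  by (simp add: transpose_def vec_eq_iff)

lemma transpose_diff: "transpose (A - B) = transpose A - transpose (B::real^'n^'m)"
  by (simp add: transpose_def vec_eq_iff)

lemma transpose_uminus: "transpose (- A) = - transpose (A::real^'n^'m)"
  by (simp add: transpose_def vec_eq_iff)

lemma transpose_zero [simp]: "transpose (0::real^'n^'m) = 0"
  by (simp add: transpose_def vec_eq_iff)

lemma uminus_matrix_vector_mult: "(- A) *v x = - (A *v (x::real^'n))"
  by (simp add: matrix_vector_mult_def vec_eq_iff sum_negf)

lemma matrix_vector_mult_uminus_right: "A *v (- x) = - (A *v (x::real^'n))"
  by (simp add: matrix_vector_mult_def vec_eq_iff sum_negf)

lemma scaleR_matrix_vector_mult: "(k *\<^sub>R A) *v x = k *\<^sub>R (A *v (x::real^'n))"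
  by (simp add: matrix_vector_mult_def vec_eq_iff sum_distrib_left mult.assoc)

lemma matrix_add_rdistrib: "(A + B) ** C = A ** C + B ** (C::real^'n^'m)"
  by (simp add: matrix_matrix_mult_def vec_eq_iff sum.distrib distrib_right)

lemma matrix_diff_ldistrib: "(A::real^'n^'m) ** (B - C) = A ** B - A ** C"
  by (simp add: matrix_matrix_mult_def vec_eq_iff sum_subtractf right_diff_distrib)

lemma matrix_matrix_vector_assoc: "(A ** B) *v x = A *v (B *v x)"
  by (simp add: matrix_vector_mul_assoc)

lemmas block_simps = vcat_mult hcat_mult_vjoin matrix_vector_mult_add_rdistrib
  matrix_vector_mult_diff_rdistrib uminus_matrix_vector_mult scaleR_matrix_vector_mult
  matrix_matrix_vector_assoc transpose_vcat transpose_hcat transpose_add transpose_diff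
  transpose_uminus matrix_transpose_mul vjoin_add vjoin_minus vjoin_diff

definition outer :: "real^'a \<Rightarrow> real^'b \<Rightarrow> real^'b^'a" where
  "outer c u = (\<chi> i j. c $ i * u $ j)"

lemma outer_mult: "outer c u *v x = (u \<bullet> x) *\<^sub>R c"
  by (simp add: outer_def matrix_vector_mult_def vec_eq_iff inner_vec_def sum_distrib_left mult_ac)

lemma outer_matrix_mult: "outer c u ** M = outer c (transpose M *v u)"
  by (simp add: outer_def matrix_matrix_mult_def vec_eq_iff matrix_vector_mult_def transpose_def
      sum_distrib_left mult_ac)

lemma outer_add_right: "outer c u + outer c v = outer c (u + v)"
  by (simp add: outer_def vec_eq_iff algebra_simps)

lemma outer_zero_right [simp]: "outer c 0 = 0"
  by (simp add: outer_def vec_eq_iff)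

lemma inner_matrix_sym: "transpose M = M \<Longrightarrow> x \<bullet> (M *v y) = y \<bullet> (M *v (x::real^'n))"
  by (metis dot_lmul_matrix inner_commute transpose_matrix_vector)

lemma inner_transpose_mult: "x \<bullet> (transpose M *v y) = (M *v x) \<bullet> (y::real^'n)"
  by (metis dot_lmul_matrix inner_commute transpose_matrix_vector)

lemma quadratic_form_congruence:
  "x \<bullet> ((transpose M ** Q ** M) *v x) = (M *v x) \<bullet> (Q *v (M *v (x::real^'n)))"
  by (simp add: inner_transpose_mult flip: matrix_vector_mul_assoc)

lemma quadratic_form_congruence_transpose:
  "(w::real^'n) \<bullet> ((M ** Q ** transpose M) *v w) = (transpose M *v w) \<bullet> (Q *v (transpose M *v w))"
  using quadratic_form_congruence[of w "transpose M" Q] by simp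

lemma transpose_congruence:
  "transpose Q = Q \<Longrightarrow> transpose (transpose M ** Q ** M) = transpose M ** Q ** (M::real^'n^'m)"
  by (simp add: matrix_transpose_mul matrix_mul_assoc)

lemma quadratic_form_add_scaled:
  assumes "transpose F = F"
  shows "(x + t *\<^sub>R y) \<bullet> (F *v (x + t *\<^sub>R y))
           = x \<bullet> (F *v x) + 2 * t * (x \<bullet> (F *v y)) + t\<^sup>2 * (y \<bullet> (F *v (y::real^'k)))"
proof -
  have "y \<bullet> (F *v x) = x \<bullet> (F *v y)" by (rule inner_matrix_sym[OF assms])
  thus ?thesis
    by (simp add: matrix_vector_right_distrib matrix_vector_mult_scaleR inner_add_left inner_add_right
        algebra_simps power2_eq_square)
qed

lemma quadratic_form_cauchy_schwarz:
  fixes G :: "real^'k^'k"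
  assumes sym: "transpose G = G" and nonneg: "\<And>v. 0 \<le> v \<bullet> (G *v v)"
  shows "(x \<bullet> (G *v y))\<^sup>2 \<le> (x \<bullet> (G *v x)) * (y \<bullet> (G *v y))"
proof -
  define a b c where "a = x \<bullet> (G *v x)" and "b = x \<bullet> (G *v y)" and "c = y \<bullet> (G *v y)"
  have q: "0 \<le> a + 2 * t * b + t\<^sup>2 * c" for t
    using nonneg[of "x + t *\<^sub>R y"] unfolding quadratic_form_add_scaled[OF sym] a_def b_def c_def .
  show ?thesis
  proof (cases "c = 0")
    case True
    have "b = 0"
    proof (rule ccontr)
      assume "b \<noteq> 0"
      hence "0 \<le> a + 2 * (- (a + 1) / (2 * b)) * b" using q[of "- (a + 1) / (2 * b)"] True by simp
      also have "\<dots> = -1" using \<open>b \<noteq> 0\<close> by (simp add: field_simps)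
      finally show False by simp
    qed
    thus ?thesis using True by (simp add: a_def b_def c_def)
  next
    case False
    hence c: "c > 0" using nonneg[of y] by (simp add: c_def)
    have "0 \<le> a + 2 * (- b / c) * b + (- b / c)\<^sup>2 * c" by (rule q)
    also have "\<dots> = a - b\<^sup>2 / c" using c by (simp add: field_simps power2_eq_square)
    finally show ?thesis using c by (simp add: a_def b_def c_def divide_le_eq)
  qed
qed

text \<open>Choosing \<open>a\<close> along \<open>G x\<close> lets Cauchy--Schwarz for \<open>G\<close> absorb the nonpositive term.\<close>

lemma quadratic_form_rank_one_update:
  fixes G :: "real^'k^'k"
  assumes sym: "transpose G = G" and nonneg: "\<And>v. 0 \<le> v \<bullet> (G *v v)"
    and "x \<noteq> 0" and "\<nu> \<le> 0" and budget: "0 \<le> x \<bullet> (G *v x) + \<nu>"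
  obtains a where "a \<bullet> x = 1" "\<And>\<xi>. 0 \<le> \<xi> \<bullet> (G *v \<xi>) + (a \<bullet> \<xi>)\<^sup>2 * \<nu>"
proof -
  define gx where "gx = x \<bullet> (G *v x)"
  define a where "a = (if gx > 0 then (1 / gx) *\<^sub>R (G *v x) else (1 / (x \<bullet> x)) *\<^sub>R x)"
  have "a \<bullet> x = 1" using \<open>x \<noteq> 0\<close> by (auto simp: a_def gx_def inner_commute)
  moreover have "0 \<le> \<xi> \<bullet> (G *v \<xi>) + (a \<bullet> \<xi>)\<^sup>2 * \<nu>" for \<xi>
  proof (cases "gx > 0")
    case True
    have "a \<bullet> \<xi> = (\<xi> \<bullet> (G *v x)) / gx"
      using True inner_matrix_sym[OF sym, of x \<xi>] by (simp add: a_def inner_commute)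
    hence "(a \<bullet> \<xi>)\<^sup>2 * gx = (\<xi> \<bullet> (G *v x))\<^sup>2 / gx"
      using True by (simp add: power2_eq_square)
    also have "\<dots> \<le> \<xi> \<bullet> (G *v \<xi>)"
      using quadratic_form_cauchy_schwarz[OF sym nonneg, of \<xi> x] True by (simp add: divide_le_eq gx_def)
    finally have "(a \<bullet> \<xi>)\<^sup>2 * gx \<le> \<xi> \<bullet> (G *v \<xi>)" .
    moreover have "(a \<bullet> \<xi>)\<^sup>2 * (- gx) \<le> (a \<bullet> \<xi>)\<^sup>2 * \<nu>"
      using budget by (intro mult_left_mono) (auto simp: gx_def)
    ultimately show ?thesis by simp
  next
    case False
    hence "\<nu> = 0" using budget \<open>\<nu> \<le> 0\<close> nonneg[of x] by (simp add: gx_def)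
    thus ?thesis using nonneg[of \<xi>] by simp
  qed
  ultimately show ?thesis using that by blast
qed

lemma pd_quadratic_form_nonneg: "pd P \<Longrightarrow> 0 \<le> x \<bullet> (P *v x)"
  unfolding pd_def by (cases "x = 0") (auto intro: less_imp_le)

lemma psd_diff_scaled_quadratic_form:
  assumes "psd (F - \<alpha> *\<^sub>R G)" "\<alpha> \<ge> 0" "0 \<le> w \<bullet> (G *v w)"
  shows "0 \<le> w \<bullet> (F *v w)"
proof -
  have "0 \<le> w \<bullet> (F *v w) - \<alpha> * (w \<bullet> (G *v w))"
    using assms(1) by (simp add: psd_def matrix_vector_mult_diff_rdistrib scaleR_matrix_vector_mult
        inner_diff_right)
  thus ?thesis using mult_nonneg_nonneg[OF assms(2,3)] by linarith
qed

lemma psd_diff_scaledI: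
  assumes "transpose F = F" "transpose G = G" "\<And>w. \<alpha> * (w \<bullet> (G *v w)) \<le> w \<bullet> (F *v w)"
  shows "psd (F - \<alpha> *\<^sub>R G)"
  using assms by (simp add: psd_def transpose_diff transpose_scalar matrix_vector_mult_diff_rdistrib
      scaleR_matrix_vector_mult inner_diff_right)

lemma sym_matrix_solvable:
  fixes M :: "real^'k^'k"
  assumes symM: "transpose M = M" and ker: "\<And>d. M *v d = 0 \<Longrightarrow> c \<bullet> d = 0"
  shows "\<exists>z. M *v z = c"
proof -
  have range: "subspace (range ((*v) M))"
    using linear_subspace_image[OF matrix_vector_mul_linear subspace_UNIV] by blast
  obtain y z where y: "y \<in> span (range ((*v) M))"
    and z: "\<And>w. w \<in> span (range ((*v) M)) \<Longrightarrow> orthogonal z w" and c: "c = y + z"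
    using orthogonal_subspace_decomp_exists by blast
  have "orthogonal z (M *v (M *v z))" using z by (simp add: span_base)
  hence "M *v z = 0" unfolding orthogonal_def by (metis inner_matrix_sym[OF symM] inner_eq_zero_iff)
  hence "c \<bullet> z = 0" by (rule ker)
  moreover have "y \<bullet> z = 0" using z y by (simp add: orthogonal_def inner_commute)
  ultimately have "c = y" using c by (simp add: inner_add_left)
  moreover have "y \<in> range ((*v) M)" using y unfolding span_eq_iff[THEN iffD2, OF range] .
  ultimately show ?thesis by auto
qed

lemma sym_matrix_solvable_matrix:
  fixes M :: "real^'k^'k" and R :: "real^'j^'k"
  assumes symM: "transpose M = M" and ker: "\<And>d. M *v d = 0 \<Longrightarrow> transpose R *v d = 0"
  obtains Z where "M ** Z = R"
proof -
  have "(R *v axis j 1) \<bullet> d = 0" if "M *v d = 0" for d j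
    using inner_transpose_mult[of "axis j 1" R d] ker[OF that] by (simp add: inner_commute)
  hence "\<exists>z. M *v z = R *v axis j 1" for j by (rule sym_matrix_solvable[OF symM])
  then obtain z where z: "\<And>j. M *v z j = R *v axis j 1" by metis
  have "(M ** (\<chi> i j. z j $ i)) $ i $ j = R $ i $ j" for i j
  proof -
    have "(M ** (\<chi> i j. z j $ i)) $ i $ j = (M *v z j) $ i"
      by (simp add: matrix_matrix_mult_def matrix_vector_mult_def)
    thus ?thesis by (simp add: z matrix_vector_mul_component inner_axis)
  qed
  hence "M ** (\<chi> i j. z j $ i) = R" by (simp add: vec_eq_iff)
  thus ?thesis by (rule that)
qed

context
  fixes Y :: "real^'n^'n"
  assumes pdY: "pd Y"
begin

lemma pd_matrix_inv_mult: "Y ** matrix_inv Y = mat 1" "matrix_inv Y ** Y = mat 1"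
proof -
  have "\<forall>x. Y *v x = 0 \<longrightarrow> x = 0"
    using pdY unfolding pd_def by (metis inner_zero_right less_irrefl)
  hence "invertible Y"
    by (simp add: matrix_left_invertible_ker invertible_left_inverse)
  hence "\<exists>A'. Y ** A' = mat 1 \<and> A' ** Y = mat 1" by (simp add: invertible_def)
  hence "Y ** matrix_inv Y = mat 1 \<and> matrix_inv Y ** Y = mat 1"
    unfolding matrix_inv_def by (rule someI_ex)
  thus "Y ** matrix_inv Y = mat 1" "matrix_inv Y ** Y = mat 1" by auto
qed

lemma pd_matrix_inv_cancel: "Y *v (matrix_inv Y *v x) = x" "matrix_inv Y *v (Y *v x) = x"
  by (simp_all add: pd_matrix_inv_mult flip: matrix_matrix_vector_assoc)

lemma pd_matrix_inv_sym: "transpose (matrix_inv Y) = matrix_inv Y"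
proof -
  have "transpose Y = Y" using pdY by (simp add: pd_def)
  hence "transpose (matrix_inv Y) ** Y = mat 1"
    by (metis pd_matrix_inv_mult(1) matrix_transpose_mul transpose_mat)
  thus ?thesis
    by (metis pd_matrix_inv_mult matrix_mul_assoc matrix_mul_lid matrix_mul_rid)
qed

lemma pd_matrix_inv: "pd (matrix_inv Y)"
  unfolding pd_def
proof (intro conjI allI impI pd_matrix_inv_sym)
  fix x :: "real^'n" assume "x \<noteq> 0"
  hence "matrix_inv Y *v x \<noteq> 0" by (metis pd_matrix_inv_cancel(1) matrix_vector_mult_0_right)
  moreover have "x \<bullet> (matrix_inv Y *v x) = (matrix_inv Y *v x) \<bullet> (Y *v (matrix_inv Y *v x))"
    by (simp add: pd_matrix_inv_cancel inner_commute)
  ultimately show "0 < x \<bullet> (matrix_inv Y *v x)" using pdY by (simp add: pd_def)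
qed

end

section \<open>Lyapunov certificates\<close>

lemma trace_eq_sum_quadratic_forms:
  "trace (M::real^'n^'n) = (\<Sum>i\<in>UNIV. axis i 1 \<bullet> (M *v axis i 1))"
  by (simp add: trace_def inner_axis' matrix_vector_mul_component inner_axis)

lemma h2_sq_terms_eq_sum_columns:
  "h2_sq_terms A Cc k = (\<Sum>i\<in>UNIV. (Cc *v (matpow A k *v axis i 1)) \<bullet> (Cc *v (matpow A k *v axis i 1)))"
  by (simp add: h2_sq_terms_def trace_eq_sum_quadratic_forms inner_transpose_mult matrix_matrix_vector_assoc)

text \<open>Summing the dissipation inequality along the columns of \<open>A\<^sup>k\<close> telescopes.\<close>

lemma lyapunov_h2_bound:
  fixes A P :: "real^'n^'n" and Cc :: "real^'n^'p"
  assumes P: "\<And>x. 0 \<le> x \<bullet> (P *v x)"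
    and lyap: "\<And>x. (A *v x) \<bullet> (P *v (A *v x)) + (Cc *v x) \<bullet> (Cc *v x) \<le> x \<bullet> (P *v x)"
  shows "summable (h2_sq_terms A Cc)" "(\<Sum>k. h2_sq_terms A Cc k) \<le> trace P"
proof -
  define s where "s k = (\<Sum>i\<in>UNIV. (matpow A k *v axis i 1) \<bullet> (P *v (matpow A k *v axis i 1)))" for k
  have step: "h2_sq_terms A Cc k + s (Suc k) \<le> s k" for k
    unfolding h2_sq_terms_eq_sum_columns s_def
    by (simp add: sum.distrib[symmetric] matrix_matrix_vector_assoc)
      (intro sum_mono, metis add.commute lyap)
  have partial: "(\<Sum>k<N. h2_sq_terms A Cc k) \<le> s 0 - s N" for N
  proof (induction N)
    case (Suc N)
    thus ?case using step[of N] by simp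
  qed simp
  have s_nonneg: "s N \<ge> 0" for N unfolding s_def by (intro sum_nonneg P)
  have "s 0 = trace P" by (simp add: s_def trace_eq_sum_quadratic_forms)
  hence bound: "(\<Sum>k<N. h2_sq_terms A Cc k) \<le> trace P" for N
    using partial[of N] s_nonneg[of N] by linarith
  have "0 \<le> h2_sq_terms A Cc k" for k
    unfolding h2_sq_terms_eq_sum_columns by (intro sum_nonneg) simp
  thus "summable (h2_sq_terms A Cc)" by (rule summableI_nonneg_bounded[OF _ bound])
  thus "(\<Sum>k. h2_sq_terms A Cc k) \<le> trace P" by (rule suminf_le_const[OF _ bound])
qed

lemma eigenvector_real_imag_parts:
  fixes A :: "real^'n^'n"
  assumes "(\<chi> i j. complex_of_real (A $ i $ j)) *v v = l *s v"
  defines "re \<equiv> \<chi> i. Re (v $ i)" and "im \<equiv> \<chi> i. Im (v $ i)"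
  shows "A *v re = Re l *\<^sub>R re - Im l *\<^sub>R im" "A *v im = Im l *\<^sub>R re + Re l *\<^sub>R im"
proof -
  have row: "(\<Sum>j\<in>UNIV. complex_of_real (A $ i $ j) * v $ j) = l * v $ i" for i
    using arg_cong[OF assms(1), of "\<lambda>w. w $ i"] by (simp add: matrix_vector_mult_def)
  show "A *v re = Re l *\<^sub>R re - Im l *\<^sub>R im"
    using arg_cong[OF row, of Re]
    by (simp add: vec_eq_iff matrix_vector_mult_def re_def im_def)
  show "A *v im = Im l *\<^sub>R re + Re l *\<^sub>R im"
    using arg_cong[OF row, of Im]
    by (simp add: vec_eq_iff matrix_vector_mult_def re_def im_def algebra_simps)
qed

lemma lyapunov_schur_stable:
  fixes A P :: "real^'n^'n"
  assumes P: "\<And>x. 0 \<le> x \<bullet> (P *v x)"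
    and lyap: "\<And>x. x \<noteq> 0 \<Longrightarrow> (A *v x) \<bullet> (P *v (A *v x)) < x \<bullet> (P *v x)"
  shows "schur_stable A"
  unfolding schur_stable_def
proof (intro allI impI, elim conjE)
  fix l :: complex and v :: "complex^'n"
  assume "v \<noteq> 0" and ev: "(\<chi> i j. complex_of_real (A $ i $ j)) *v v = l *s v"
  define re im where "re = (\<chi> i. Re (v $ i))" and "im = (\<chi> i. Im (v $ i))"
  define f where "f x = x \<bullet> (P *v x)" for x
  have "f (A *v re) + f (A *v im) = ((Re l)\<^sup>2 + (Im l)\<^sup>2) * (f re + f im)"
    unfolding f_def eigenvector_real_imag_parts[OF ev, folded re_def im_def]
    by (simp add: algebra_simps power2_eq_square)
  moreover have "re \<noteq> 0 \<or> im \<noteq> 0"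
    using \<open>v \<noteq> 0\<close> by (auto simp: re_def im_def vec_eq_iff complex_eq_iff)
  hence "f (A *v re) + f (A *v im) < f re + f im"
    using lyap[of re] lyap[of im] unfolding f_def by (cases "re = 0"; cases "im = 0") auto
  moreover have "0 \<le> f (A *v re) + f (A *v im)" using P unfolding f_def by simp
  ultimately have "((Re l)\<^sup>2 + (Im l)\<^sup>2) * (f re + f im) < f re + f im" "0 < f re + f im"
    by linarith+
  hence "(Re l)\<^sup>2 + (Im l)\<^sup>2 < 1" using mult_less_cancel_right_pos[of "f re + f im" _ 1] by simp
  thus "cmod l < 1" by (simp add: cmod_def)
qed

lemma quadratic_form_lyapunov:
  "x \<bullet> ((P - transpose A ** P ** A - transpose Cc ** Cc) *v x)
     = x \<bullet> (P *v x) - (A *v x) \<bullet> (P *v (A *v x)) - (Cc *v x) \<bullet> (Cc *v (x::real^'n))"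
  using quadratic_form_congruence[of x Cc "mat 1"]
  by (simp add: matrix_vector_mult_diff_rdistrib inner_diff_right quadratic_form_congruence)

lemma lyapunov_certificate:
  fixes A P :: "real^'n^'n" and Cc :: "real^'n^'p"
  assumes P: "pd P" and cert: "pd (P - transpose A ** P ** A - transpose Cc ** Cc)"
  shows "schur_stable A" "summable (h2_sq_terms A Cc)" "(\<Sum>k. h2_sq_terms A Cc k) \<le> trace P"
proof -
  have strict: "(A *v x) \<bullet> (P *v (A *v x)) + (Cc *v x) \<bullet> (Cc *v x) < x \<bullet> (P *v x)" if "x \<noteq> 0" for x
    using cert that unfolding pd_def quadratic_form_lyapunov by auto
  have "(A *v x) \<bullet> (P *v (A *v x)) + (Cc *v x) \<bullet> (Cc *v x) \<le> x \<bullet> (P *v x)" for x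
    using strict[of x] by (cases "x = 0") auto
  thus "summable (h2_sq_terms A Cc)" "(\<Sum>k. h2_sq_terms A Cc k) \<le> trace P"
    using lyapunov_h2_bound pd_quadratic_form_nonneg[OF P] by blast+
  have "(A *v x) \<bullet> (P *v (A *v x)) < x \<bullet> (P *v x)" if "x \<noteq> 0" for x
    using strict[OF that] inner_ge_zero[of "Cc *v x"] by linarith
  thus "schur_stable A" by (rule lyapunov_schur_stable[OF pd_quadratic_form_nonneg[OF P]])
qed

section \<open>The S-lemma and a uniform margin\<close>

lemma quadratic_roots_opposite_signs:
  fixes a b c :: real
  assumes "a > 0" "c < 0"
  obtains t1 t2 where "t1 < 0" "0 < t2" "a + 2 * t1 * b + t1\<^sup>2 * c = 0" "a + 2 * t2 * b + t2\<^sup>2 * c = 0"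
proof -
  define r where "r = sqrt (b\<^sup>2 - a * c)"
  have ac: "a * c < 0" using assms by (simp add: mult_pos_neg)
  hence "0 \<le> b\<^sup>2 - a * c" using zero_le_power2[of b] by linarith
  hence r2: "r\<^sup>2 = b\<^sup>2 - a * c" unfolding r_def by simp
  have "sqrt (b\<^sup>2) < r" unfolding r_def using ac by (intro real_sqrt_less_mono) linarith
  hence "\<bar>b\<bar> < r" by simp
  have root: "a + 2 * t * b + t\<^sup>2 * c = 0" if "c * t = - b + r \<or> c * t = - b - r" for t
  proof -
    have "c * (a + 2 * t * b + t\<^sup>2 * c) = a * c + 2 * b * (c * t) + (c * t)\<^sup>2"
      by (simp add: algebra_simps power2_eq_square)
    also have "\<dots> = 0"
    proof -
      have "a * c + 2 * b * s + s\<^sup>2 = 0" if "s = - b + r \<or> s = - b - r" for s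
        using that r2 by (elim disjE; hypsubst; simp add: power2_eq_square algebra_simps)
      thus ?thesis using that by blast
    qed
    finally show ?thesis using assms(2) by simp
  qed
  define t1 t2 where "t1 = (- b + r) / c" and "t2 = (- b - r) / c"
  have "c * t1 = - b + r" "c * t2 = - b - r" using assms(2) by (simp_all add: t1_def t2_def)
  hence "a + 2 * t1 * b + t1\<^sup>2 * c = 0" "a + 2 * t2 * b + t2\<^sup>2 * c = 0" by (simp_all add: root)
  moreover have "t1 < 0" "0 < t2"
    using \<open>\<bar>b\<bar> < r\<close> assms(2) by (simp_all add: t1_def t2_def divide_pos_neg divide_neg_neg abs_less_iff)
  ultimately show ?thesis using that by blast
qed

lemma s_lemma_cross:
  fixes F G :: "real^'k^'k"
  assumes symF: "transpose F = F" and symG: "transpose G = G"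
    and hyp: "\<And>w. 0 \<le> w \<bullet> (G *v w) \<Longrightarrow> 0 \<le> w \<bullet> (F *v w)"
    and gx: "x \<bullet> (G *v x) > 0" and gy: "y \<bullet> (G *v y) < 0"
  shows "(x \<bullet> (F *v x)) * (y \<bullet> (G *v y)) \<le> (y \<bullet> (F *v y)) * (x \<bullet> (G *v x))"
proof -
  define a b c where "a = x \<bullet> (G *v x)" and "b = x \<bullet> (G *v y)" and "c = y \<bullet> (G *v y)"
  define fx fb fy where "fx = x \<bullet> (F *v x)" and "fb = x \<bullet> (F *v y)" and "fy = y \<bullet> (F *v y)"
  obtain t1 t2 where t: "t1 < 0" "0 < t2"
    and roots: "a + 2 * t1 * b + t1\<^sup>2 * c = 0" "a + 2 * t2 * b + t2\<^sup>2 * c = 0"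
    using quadratic_roots_opposite_signs gx gy unfolding a_def c_def by metis
  define \<mu> where "\<mu> = fx / a"
  text \<open>On each root the G-form vanishes, so the F-form is nonnegative there; subtracting
    \<open>\<mu>\<close> times the G-form leaves \<open>t (2 (fb - \<mu> b) + t (fy - \<mu> c))\<close>.\<close>
  have F_root: "0 \<le> t * (2 * (fb - \<mu> * b) + t * (fy - \<mu> * c))"
    if "a + 2 * t * b + t\<^sup>2 * c = 0" for t
  proof -
    have "0 \<le> (x + t *\<^sub>R y) \<bullet> (F *v (x + t *\<^sub>R y))"
      using that by (intro hyp) (simp add: quadratic_form_add_scaled[OF symG] a_def b_def c_def)
    also have "\<dots> = fx + 2 * t * fb + t\<^sup>2 * fy - \<mu> * (a + 2 * t * b + t\<^sup>2 * c)"
      using that by (simp add: quadratic_form_add_scaled[OF symF] fx_def fb_def fy_def)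
    also have "\<dots> = t * (2 * (fb - \<mu> * b) + t * (fy - \<mu> * c))"
      using gx unfolding \<mu>_def a_def by (simp add: field_simps power2_eq_square)
    finally show ?thesis .
  qed
  have "2 * (fb - \<mu> * b) + t1 * (fy - \<mu> * c) \<le> 0" "0 \<le> 2 * (fb - \<mu> * b) + t2 * (fy - \<mu> * c)"
    using F_root[OF roots(1)] F_root[OF roots(2)] t by (simp_all add: zero_le_mult_iff)
  hence "(t2 - t1) * (fy - \<mu> * c) \<ge> 0" by (simp add: algebra_simps)
  hence "fy - fx / a * c \<ge> 0" using t by (simp add: zero_le_mult_iff \<mu>_def)
  thus ?thesis using gx unfolding a_def c_def fx_def fy_def by (simp add: field_simps)
qed

lemma s_lemma:
  fixes F G :: "real^'k^'k"
  assumes symF: "transpose F = F" and symG: "transpose G = G"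
    and hyp: "\<And>w. 0 \<le> w \<bullet> (G *v w) \<Longrightarrow> 0 \<le> w \<bullet> (F *v w)"
    and slater: "w0 \<bullet> (G *v w0) > 0"
  obtains l where "l \<ge> 0" "\<And>w. l * (w \<bullet> (G *v w)) \<le> w \<bullet> (F *v w)"
proof -
  define f g where "f w = w \<bullet> (F *v w)" and "g w = w \<bullet> (G *v w)" for w
  define S where "S = insert 0 {f y / g y | y. g y < 0}"
  have cross: "f y / g y \<le> f x / g x" if "g x > 0" "g y < 0" for x y
    using s_lemma_cross[OF symF symG hyp, of x y] that unfolding f_def g_def
    by (simp add: field_simps)
  have f_nonneg: "g x \<ge> 0 \<Longrightarrow> f x \<ge> 0" for x using hyp unfolding f_def g_def by blast
  have le_ratio: "s \<le> f x / g x" if "s \<in> S" "g x > 0" for s x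
    using that cross[of x] f_nonneg[of x] unfolding S_def by auto
  have bdd: "bdd_above S"
    using le_ratio slater unfolding g_def by (auto simp: bdd_above_def)
  have "Sup S \<ge> 0" using bdd by (intro cSup_upper) (auto simp: S_def)
  moreover have "Sup S * g w \<le> f w" for w
  proof (cases "g w" "0::real" rule: linorder_cases)
    case less
    hence "f w / g w \<le> Sup S" using bdd by (intro cSup_upper) (auto simp: S_def)
    thus ?thesis using less by (simp add: divide_le_eq mult.commute)
  next
    case equal thus ?thesis using f_nonneg[of w] by simp
  next
    case greater
    hence "Sup S \<le> f w / g w" by (intro cSup_least le_ratio) (auto simp: S_def)
    thus ?thesis using greater by (simp add: le_divide_eq)
  qed
  ultimately show ?thesis using that unfolding f_def g_def by blast
qed

lemma quadratic_form_coercive_on_cone: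
  fixes Q G :: "real^'k^'k" and U :: "(real^'k) set"
  assumes "closed U" "\<And>c w. w \<in> U \<Longrightarrow> c *\<^sub>R w \<in> U"
    and pos: "\<And>w. w \<in> U \<Longrightarrow> w \<noteq> 0 \<Longrightarrow> 0 \<le> w \<bullet> (G *v w) \<Longrightarrow> 0 < w \<bullet> (Q *v w)"
  obtains m where "m > 0" "\<And>w. w \<in> U \<Longrightarrow> 0 \<le> w \<bullet> (G *v w) \<Longrightarrow> m * (norm w)\<^sup>2 \<le> w \<bullet> (Q *v w)"
proof -
  define q g where "q w = w \<bullet> (Q *v w)" and "g w = w \<bullet> (G *v w)" for w
  define S where "S = sphere 0 1 \<inter> U \<inter> {w. 0 \<le> g w}"
  have cont: "continuous_on UNIV q" "continuous_on UNIV g"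
    unfolding q_def g_def by (intro continuous_intros)+
  have "compact S"
    unfolding S_def using assms(1) closed_Collect_le[OF continuous_on_const cont(2)]
    by (intro compact_Int_closed compact_sphere)
  obtain m where m: "m > 0" "\<And>w. w \<in> S \<Longrightarrow> m \<le> q w"
  proof (cases "S = {}")
    case False
    obtain w0 where "w0 \<in> S" "\<And>w. w \<in> S \<Longrightarrow> q w0 \<le> q w"
      using continuous_attains_inf[OF \<open>compact S\<close> False continuous_on_subset[OF cont(1)]] by blast
    moreover have "w0 \<noteq> 0" using \<open>w0 \<in> S\<close> by (auto simp: S_def)
    hence "0 < q w0" using \<open>w0 \<in> S\<close> pos by (simp add: S_def q_def g_def)
    ultimately show ?thesis using that by blast
  qed (use that[of 1] in auto)
  have "m * (norm w)\<^sup>2 \<le> q w" if "w \<in> U" "0 \<le> g w" "w \<noteq> 0" for w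
  proof -
    define v where "v = (1 / norm w) *\<^sub>R w"
    have qv: "q v = q w / (norm w)\<^sup>2" and gv: "g v = g w / (norm w)\<^sup>2"
      by (simp_all add: v_def q_def g_def matrix_vector_mult_scaleR power2_eq_square)
    have "v \<in> S" using that assms(2) gv by (simp add: S_def v_def)
    hence "m \<le> q v" by (rule m(2))
    hence "m \<le> q w / (norm w)\<^sup>2" unfolding qv .
    thus ?thesis using that(3) by (simp add: field_simps)
  qed
  hence "m * (norm w)\<^sup>2 \<le> q w" if "w \<in> U" "0 \<le> g w" for w
    using that by (cases "w = 0") (auto simp: q_def)
  thus ?thesis using that m(1) unfolding q_def g_def by blast
qed

lemma quadratic_form_margin:
  fixes Q G :: "real^'k^'k" and V :: "(real^'k) set" and p :: "real^'k \<Rightarrow> real^'j"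
  assumes symQ: "transpose Q = Q" and symG: "transpose G = G" and V: "subspace V"
    and QV: "\<And>k. k \<in> V \<Longrightarrow> Q *v k = 0" and GV: "\<And>k. k \<in> V \<Longrightarrow> G *v k = 0"
    and pV: "\<And>k. k \<in> V \<Longrightarrow> p k = 0" and p: "linear p" "\<And>w. norm (p w) \<le> norm w"
    and pos: "\<And>w. 0 \<le> w \<bullet> (G *v w) \<Longrightarrow> w \<noteq> 0 \<Longrightarrow> (\<forall>k\<in>V. w \<bullet> k = 0) \<Longrightarrow> 0 < w \<bullet> (Q *v w)"
  obtains m where "m > 0" "\<And>w. 0 \<le> w \<bullet> (G *v w) \<Longrightarrow> m * (norm (p w))\<^sup>2 \<le> w \<bullet> (Q *v w)"
proof -
  define U where "U = (\<Inter>k\<in>V. {w. k \<bullet> w = 0})"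
  have "closed U" unfolding U_def by (intro closed_INT ballI closed_hyperplane)
  moreover have "c *\<^sub>R w \<in> U" if "w \<in> U" for c w using that by (simp add: U_def)
  moreover have "0 < w \<bullet> (Q *v w)" if "w \<in> U" "w \<noteq> 0" "0 \<le> w \<bullet> (G *v w)" for w
    using that pos[of w] unfolding U_def by (simp add: inner_commute)
  ultimately obtain m where m: "m > 0"
    and mU: "\<And>w. w \<in> U \<Longrightarrow> 0 \<le> w \<bullet> (G *v w) \<Longrightarrow> m * (norm w)\<^sup>2 \<le> w \<bullet> (Q *v w)"
    using quadratic_form_coercive_on_cone[of U G Q] by blast
  have "m * (norm (p w))\<^sup>2 \<le> w \<bullet> (Q *v w)" if g: "0 \<le> w \<bullet> (G *v w)" for w
  proof -
    obtain k w' where k: "k \<in> span V" and orth: "\<And>v. v \<in> span V \<Longrightarrow> orthogonal w' v"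
      and w: "w = k + w'"
      using orthogonal_subspace_decomp_exists by blast
    have span: "span V = V" using V by (rule span_eq_iff[THEN iffD2])
    have k: "k \<in> V" using k unfolding span .
    have "v \<bullet> w' = 0" if "v \<in> V" for v
      using orth[of v] that span by (simp add: orthogonal_def inner_commute)
    hence w': "w' \<in> U" by (simp add: U_def)
    have "k \<bullet> (Q *v w') = 0" "k \<bullet> (G *v w') = 0"
      using inner_matrix_sym[OF symQ, of k w'] inner_matrix_sym[OF symG, of k w'] QV[OF k] GV[OF k]
      by simp_all
    hence same: "w \<bullet> (Q *v w) = w' \<bullet> (Q *v w')" "w \<bullet> (G *v w) = w' \<bullet> (G *v w')" "p w = p w'"
      using QV[OF k] GV[OF k] pV[OF k] linear_add[OF p(1)] unfolding w
      by (simp_all add: matrix_vector_right_distrib inner_add_left inner_add_right)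
    have "m * (norm (p w'))\<^sup>2 \<le> m * (norm w')\<^sup>2"
      using m p(2)[of w'] by (simp add: power_mono)
    thus ?thesis using mU[OF w'] g unfolding same by linarith
  qed
  thus ?thesis using that m by blast
qed

definition data_multiplier ::
    "real^'n^'n \<Rightarrow> real^'T^'n \<Rightarrow> real^'T^'T \<Rightarrow> real^'T^'n \<Rightarrow> real^'T^'n \<Rightarrow> real^'T^'m
     \<Rightarrow> real^('n + ('n + ('m + ('n + 'p::finite))))^('n + ('n + ('m + ('n + 'p))))" where
  "data_multiplier P11 P12 P22 Xp Xm Um =
     M5 Xp Xm Um ** Phi_mat P11 P12 P22 ** transpose (M5 Xp Xm Um)"

definition output_block :: "real^'n^'n \<Rightarrow> real^'n^'p \<Rightarrow> real^('n + 'p)^('n + 'p)" where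
  "output_block Y CY = vcat (hcat Y (transpose CY)) (hcat CY (mat 1))"

definition coupling_block :: "real^'n^'n \<Rightarrow> real^'n^'n \<Rightarrow> real^('n + 'n)^('n + 'n)" where
  "coupling_block Z Y = vcat (hcat Z (mat 1)) (hcat (mat 1) Y)"

lemma Phi_mat_mult_vjoin:
  "Phi_mat P11 P12 P22 *v vjoin a b = vjoin (P11 *v a + P12 *v b) (transpose P12 *v a + P22 *v b)"
  by (simp add: Phi_mat_def block_simps)

lemma Phi_mat_sym:
  "transpose P11 = P11 \<Longrightarrow> transpose P22 = P22 \<Longrightarrow> transpose (Phi_mat P11 P12 P22) = Phi_mat P11 P12 P22"
  by (simp add: Phi_mat_def block_simps hcat_vcat)

lemma noise_ok_quadratic_form:
  "noise_ok P11 P12 P22 W \<Longrightarrow> 0 \<le> vjoin x (transpose W *v x) \<bullet> (Phi_mat P11 P12 P22 *v vjoin x (transpose W *v x))"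
  unfolding noise_ok_def psd_def by (metis quadratic_form_congruence vcat_mult matrix_vector_mul_lid)

lemma M5_transpose_mult:
  "transpose (M5 Xp Xm Um :: real^('n::finite + 'T::finite)^('n + ('n + ('m::finite + ('n + 'p::finite)))))
      *v vjoin x (vjoin u1 (vjoin u2 (vjoin y z)))
   = vjoin x (transpose Xp *v x - transpose Xm *v u1 - transpose Um *v u2)"
  by (simp add: M5_def block_simps)

lemma N_data_left_transpose_mult:
  "transpose (N_data_left Xp Xm Um) *v vjoin x (vjoin u1 u2)
   = vjoin x (transpose Xp *v x - transpose Xm *v u1 - transpose Um *v u2)"
  by (simp add: N_data_left_def block_simps)

lemma data_multiplier_sym:
  "transpose P11 = P11 \<Longrightarrow> transpose P22 = P22 \<Longrightarrow>
   transpose (data_multiplier P11 P12 P22 Xp Xm Um) = data_multiplier P11 P12 P22 Xp Xm Um"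
  using transpose_congruence[of "Phi_mat P11 P12 P22" "transpose (M5 Xp Xm Um)"]
  by (simp add: data_multiplier_def Phi_mat_sym)

lemma data_multiplier_form:
  "vjoin x (vjoin u1 (vjoin u2 (vjoin y z))) \<bullet>
     (data_multiplier P11 P12 P22 Xp Xm Um *v vjoin x (vjoin u1 (vjoin u2 (vjoin y z))))
   = (let h = vjoin x (transpose Xp *v x - transpose Xm *v u1 - transpose Um *v u2)
      in h \<bullet> (Phi_mat P11 P12 P22 *v h))"
  by (simp add: data_multiplier_def quadratic_form_congruence_transpose M5_transpose_mult Let_def)

lemma Sigma_set_data_multiplier_form:
  assumes "(A, B) \<in> Sigma_set P11 P12 P22 Xp Xm Um"
  shows "0 \<le> vjoin x (vjoin (transpose A *v x) (vjoin (transpose B *v x) (vjoin y z))) \<bullet>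
     (data_multiplier P11 P12 P22 Xp Xm Um *v vjoin x (vjoin (transpose A *v x) (vjoin (transpose B *v x) (vjoin y z))))"
proof -
  obtain W where Xp: "Xp = A ** Xm + B ** Um + W" and W: "noise_ok P11 P12 P22 W"
    using assms by (auto simp: Sigma_set_def)
  have "transpose Xp *v x - transpose Xm *v (transpose A *v x) - transpose Um *v (transpose B *v x)
        = transpose W *v x"
    by (simp add: Xp block_simps)
  thus ?thesis using noise_ok_quadratic_form[OF W] by (simp add: data_multiplier_form Let_def)
qed

lemma LMI_block_mult:
  "LMI_block Y L C D \<beta> *v vjoin x (vjoin u1 (vjoin u2 (vjoin y z))) =
   vjoin (Y *v x - \<beta> *\<^sub>R x) (vjoin (Y *v y) (vjoin (L *v y)
     (vjoin (Y *v u1 + transpose L *v u2 + Y *v y + transpose (C ** Y + D ** L) *v z)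
            ((C ** Y + D ** L) *v y + z))))"
  by (simp add: LMI_block_def Let_def block_simps)

lemma LMI_block_sym: "transpose Y = Y \<Longrightarrow> transpose (LMI_block Y L C D \<beta>) = LMI_block Y L C D \<beta>"
  unfolding LMI_block_def Let_def
  by (simp add: transpose_vcat transpose_hcat hcat_vcat transpose_diff transpose_scalar)

lemma LMI_block_feedback_form:
  assumes "transpose Y = Y"
  shows "vjoin x (vjoin u1 (vjoin u2 (vjoin y z))) \<bullet> (LMI_block Y (K ** Y) C D \<beta> *v vjoin x (vjoin u1 (vjoin u2 (vjoin y z))))
    = x \<bullet> (Y *v x) - \<beta> * (x \<bullet> x) + 2 * ((u1 + transpose K *v u2) \<bullet> (Y *v y)) + y \<bullet> (Y *v y)
      + 2 * (z \<bullet> ((C + D ** K) *v (Y *v y))) + z \<bullet> z"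
proof -
  have "y \<bullet> (Y *v u1) = u1 \<bullet> (Y *v y)" by (rule inner_matrix_sym[OF assms])
  moreover have "y \<bullet> (transpose (K ** Y) *v u2) = (transpose K *v u2) \<bullet> (Y *v y)"
    by (simp add: inner_transpose_mult inner_commute matrix_matrix_vector_assoc)
  moreover have CY: "C ** Y + D ** (K ** Y) = (C + D ** K) ** Y"
    by (simp add: matrix_add_rdistrib matrix_mul_assoc)
  hence "y \<bullet> (transpose (C ** Y + D ** (K ** Y)) *v z) = z \<bullet> ((C + D ** K) *v (Y *v y))"
    by (simp add: inner_transpose_mult inner_commute matrix_matrix_vector_assoc)
  moreover have "u2 \<bullet> (K *v (Y *v y)) = (transpose K *v u2) \<bullet> (Y *v y)"
    by (metis inner_commute inner_transpose_mult)
  moreover have "(K ** Y) *v y = K *v (Y *v y)" "(C ** Y + D ** (K ** Y)) *v y = (C + D ** K) *v (Y *v y)"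
    by (simp_all add: block_simps)
  ultimately show ?thesis
    by (simp add: LMI_block_mult inner_add_right inner_diff_right inner_add_left
        inner_commute[of y "Y *v y"])
qed

lemma LMI_block_form_scaled_identity:
  "w \<bullet> (LMI_block Y L C D \<beta> *v w) = w \<bullet> (LMI_block Y L C D 0 *v w) - \<beta> * (vfst w \<bullet> vfst w)"
  by (rule vjoin5_cases[of w]) (simp add: LMI_block_mult inner_diff_right)

lemma closed_loop_transpose_mult:
  fixes A :: "real^'n^'n" and B :: "real^'m^'n" and K :: "real^'n^'m"
  shows "transpose A *v x + transpose K *v (transpose B *v x) = transpose (A + B ** K) *v x"
  by (simp add: block_simps)

lemma output_block_form:
  "vjoin a b \<bullet> (output_block Y CY *v vjoin a b) = a \<bullet> (Y *v a) + 2 * (b \<bullet> (CY *v a)) + b \<bullet> b"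
  by (simp add: output_block_def block_simps inner_add_right inner_transpose_mult inner_commute)

lemma output_block_feedback_form:
  assumes "c = (C + D ** K) *v (Y *v a)"
  shows "vjoin a b \<bullet> (output_block Y ((C + D ** K) ** Y) *v vjoin a b)
           = a \<bullet> (Y *v a) - c \<bullet> c + (b + c) \<bullet> (b + c)"
proof -
  have "((C + D ** K) ** Y) *v a = c" using assms by (simp add: matrix_matrix_vector_assoc)
  thus ?thesis
    by (simp add: output_block_form inner_add_left inner_add_right inner_commute[of c b])
qed

lemma coupling_block_form:
  "vjoin a b \<bullet> (coupling_block Z Y *v vjoin a b) = a \<bullet> (Z *v a) + 2 * (a \<bullet> b) + b \<bullet> (Y *v b)"
  by (simp add: coupling_block_def block_simps inner_add_right inner_commute)

section \<open>Sufficiency of the LMIs\<close>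

definition h2_lmis ::
    "real^'n^'n \<Rightarrow> real^'T^'n \<Rightarrow> real^'T^'T \<Rightarrow> real^'T^'n \<Rightarrow> real^'T^'n \<Rightarrow> real^'T^'m
     \<Rightarrow> real^'n^'p \<Rightarrow> real^'m^'p \<Rightarrow> real
     \<Rightarrow> real^'n^'n \<Rightarrow> real^'n^'n \<Rightarrow> real^'n^'m \<Rightarrow> real \<Rightarrow> real \<Rightarrow> bool" where
  "h2_lmis P11 P12 P22 Xp Xm Um C D \<gamma> Y Z L \<alpha> \<beta> \<longleftrightarrow>
     pd Y \<and> transpose Z = Z \<and> \<alpha> \<ge> 0 \<and> \<beta> > 0 \<and>
     psd (LMI_block Y L C D \<beta> - \<alpha> *\<^sub>R data_multiplier P11 P12 P22 Xp Xm Um) \<and>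
     pd (output_block Y (C ** Y + D ** L)) \<and>
     psd (coupling_block Z Y) \<and>
     trace Z < \<gamma>\<^sup>2"

lemma pd_lyapunov_iff:
  fixes A P :: "real^'n^'n" and Cc :: "real^'n^'p"
  assumes "transpose P = P"
  shows "pd (P - transpose A ** P ** A - transpose Cc ** Cc) \<longleftrightarrow>
         (\<forall>x. x \<noteq> 0 \<longrightarrow> (A *v x) \<bullet> (P *v (A *v x)) + (Cc *v x) \<bullet> (Cc *v x) < x \<bullet> (P *v x))"
proof -
  have "transpose (P - transpose A ** P ** A - transpose Cc ** Cc) = P - transpose A ** P ** A - transpose Cc ** Cc"
    using assms transpose_congruence[of P A] transpose_congruence[of "mat 1" Cc]
    by (simp add: transpose_diff)
  thus ?thesis unfolding pd_def quadratic_form_lyapunov by auto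
qed

lemma trace_matrix_inv_le:
  assumes Y: "pd Y" and ZY: "psd (coupling_block Z Y)"
  shows "trace (matrix_inv Y) \<le> trace Z"
proof -
  have "\<xi> \<bullet> (matrix_inv Y *v \<xi>) \<le> \<xi> \<bullet> (Z *v \<xi>)" for \<xi>
  proof -
    define v where "v = matrix_inv Y *v \<xi>"
    have "0 \<le> vjoin \<xi> (- v) \<bullet> (coupling_block Z Y *v vjoin \<xi> (- v))"
      using ZY by (simp add: psd_def)
    also have "\<dots> = \<xi> \<bullet> (Z *v \<xi>) - \<xi> \<bullet> v"
      using pd_matrix_inv_cancel(1)[OF Y, of \<xi>]
      by (simp add: coupling_block_form v_def matrix_vector_mult_uminus_right inner_commute)
    finally show ?thesis by (simp add: v_def)
  qed
  thus ?thesis unfolding trace_eq_sum_quadratic_forms by (intro sum_mono)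
qed

text \<open>The test vector \<open>(P a, A\<^sup>T P a, B\<^sup>T P a, -P \<xi>, (C + D K) \<xi>)\<close> with \<open>P = Y\<^sup>-\<^sup>1\<close> and
  \<open>a = (A + B K) \<xi>\<close> turns the LMI into the Lyapunov decrease of \<open>\<xi>\<close>.\<close>

lemma LMI_block_test_vector_form:
  fixes Y :: "real^'n^'n" and L :: "real^'n^'m" and C :: "real^'n^'p" and D :: "real^'m^'p"
    and A :: "real^'n^'n" and B :: "real^'m^'n"
  assumes Y: "pd Y" and K: "K = L ** matrix_inv Y"
    and a: "a = (A + B ** K) *v \<xi>" and x: "x = matrix_inv Y *v a" and z: "z = (C + D ** K) *v \<xi>"
  defines "w \<equiv> vjoin x (vjoin (transpose A *v x) (vjoin (transpose B *v x) (vjoin (- (matrix_inv Y *v \<xi>)) z)))"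
  shows "w \<bullet> (LMI_block Y L C D \<beta> *v w)
         = \<xi> \<bullet> (matrix_inv Y *v \<xi>) - a \<bullet> (matrix_inv Y *v a) - z \<bullet> z - \<beta> * (x \<bullet> x)"
proof -
  define P where "P = matrix_inv Y"
  have L: "L = K ** Y" by (simp add: K pd_matrix_inv_mult[OF Y] flip: matrix_mul_assoc)
  have cancel: "Y *v (P *v v) = v" for v by (simp add: P_def pd_matrix_inv_cancel[OF Y])
  have symY: "transpose Y = Y" and symP: "transpose P = P"
    using Y by (simp_all add: pd_def P_def pd_matrix_inv_sym)
  have "x \<bullet> (Y *v x) = a \<bullet> (P *v a)" by (simp add: x P_def[symmetric] cancel inner_commute)
  moreover have "(transpose (A + B ** K) *v x) \<bullet> \<xi> = a \<bullet> (P *v a)"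
    using inner_transpose_mult[of \<xi> "A + B ** K" x] inner_matrix_sym[OF symP, of a a]
    by (simp add: a x P_def inner_commute)
  moreover have "(P *v \<xi>) \<bullet> \<xi> = \<xi> \<bullet> (P *v \<xi>)" by (rule inner_commute)
  ultimately show ?thesis
    unfolding w_def P_def[symmetric] L LMI_block_feedback_form[OF symY] closed_loop_transpose_mult
    by (simp add: matrix_vector_mult_uminus_right cancel z algebra_simps)
qed

lemma lmi_imp_lyapunov_decrease:
  fixes Y :: "real^'n^'n" and L :: "real^'n^'m" and C :: "real^'n^'p" and D :: "real^'m^'p"
    and Xp Xm :: "real^'T^'n" and Um :: "real^'T^'m"
  assumes Y: "pd Y" and \<alpha>: "\<alpha> \<ge> 0" and \<beta>: "\<beta> > 0"
    and lmi: "psd (LMI_block Y L C D \<beta> - \<alpha> *\<^sub>R data_multiplier P11 P12 P22 Xp Xm Um)"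
    and out: "pd (output_block Y (C ** Y + D ** L))"
    and AB: "(A, B) \<in> Sigma_set P11 P12 P22 Xp Xm Um" and "\<xi> \<noteq> 0"
  defines "P \<equiv> matrix_inv Y" and "K \<equiv> L ** matrix_inv Y"
  shows "((A + B ** K) *v \<xi>) \<bullet> (P *v ((A + B ** K) *v \<xi>)) + ((C + D ** K) *v \<xi>) \<bullet> ((C + D ** K) *v \<xi>)
         < \<xi> \<bullet> (P *v \<xi>)"
proof -
  have cancel: "Y *v (P *v v) = v" for v by (simp add: P_def pd_matrix_inv_cancel[OF Y])
  define a x z where "a = (A + B ** K) *v \<xi>" and "x = P *v a" and "z = (C + D ** K) *v \<xi>"
  have "0 \<le> \<xi> \<bullet> (P *v \<xi>) - a \<bullet> (P *v a) - z \<bullet> z - \<beta> * (x \<bullet> x)"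
    using psd_diff_scaled_quadratic_form[OF lmi \<alpha>
        Sigma_set_data_multiplier_form[OF AB, of x "- (matrix_inv Y *v \<xi>)" z]]
    unfolding LMI_block_test_vector_form[OF Y K_def[THEN meta_eq_to_obj_eq] a_def x_def[unfolded P_def] z_def]
      P_def .
  hence decrease: "a \<bullet> (P *v a) + z \<bullet> z \<le> \<xi> \<bullet> (P *v \<xi>) - \<beta> * (x \<bullet> x)" by linarith
  show ?thesis
  proof (cases "x = 0")
    case False
    hence "0 < \<beta> * (x \<bullet> x)" using \<beta> by simp
    thus ?thesis using decrease by (simp add: a_def z_def)
  next
    case True
    hence "a = 0" using cancel[of a] by (simp add: x_def)
    have "0 < vjoin (P *v \<xi>) (- z) \<bullet> (output_block Y (C ** Y + D ** L) *v vjoin (P *v \<xi>) (- z))"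
      using out \<open>\<xi> \<noteq> 0\<close> cancel[of \<xi>] unfolding pd_def by (metis vjoin_eq_0_iff matrix_vector_mult_0_right)
    also have "\<dots> = \<xi> \<bullet> (P *v \<xi>) - z \<bullet> z"
    proof -
      have "C ** Y + D ** L = (C + D ** K) ** Y"
        by (simp add: K_def matrix_add_rdistrib pd_matrix_inv_mult[OF Y] flip: matrix_mul_assoc)
      moreover have z: "z = (C + D ** K) *v (Y *v (P *v \<xi>))" by (simp add: cancel z_def)
      ultimately show ?thesis
        using output_block_feedback_form[OF z] by (simp add: cancel inner_commute)
    qed
    finally show ?thesis using \<open>a = 0\<close> by (simp add: a_def z_def)
  qed
qed

lemma h2_lmis_imp_lyapunov_certificate:
  assumes lmis: "h2_lmis P11 P12 P22 Xp Xm Um C D \<gamma> Y Z L \<alpha> \<beta>"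
    and AB: "(A, B) \<in> Sigma_set P11 P12 P22 Xp Xm Um"
  defines "P \<equiv> matrix_inv Y" and "K \<equiv> L ** matrix_inv Y"
  shows "pd (P - transpose (A + B ** K) ** P ** (A + B ** K) - transpose (C + D ** K) ** (C + D ** K))"
proof -
  have "pd Y" using lmis by (simp add: h2_lmis_def)
  have "\<forall>\<xi>. \<xi> \<noteq> 0 \<longrightarrow> ((A + B ** K) *v \<xi>) \<bullet> (P *v ((A + B ** K) *v \<xi>))
                        + ((C + D ** K) *v \<xi>) \<bullet> ((C + D ** K) *v \<xi>) < \<xi> \<bullet> (P *v \<xi>)"
    using lmi_imp_lyapunov_decrease[OF _ _ _ _ _ AB] lmis unfolding h2_lmis_def P_def K_def by blast
  thus ?thesis
    unfolding pd_lyapunov_iff[OF pd_matrix_inv_sym[OF \<open>pd Y\<close>, folded P_def]] .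
qed

lemma h2_lmis_imp_informative:
  assumes "h2_lmis P11 P12 P22 Xp Xm Um C D \<gamma> Y Z L \<alpha> \<beta>"
  shows "informative_H2 P11 P12 P22 Xp Xm Um C D \<gamma>"
proof -
  have "pd Y" "trace (matrix_inv Y) < \<gamma>\<^sup>2"
    using assms trace_matrix_inv_le[of Y Z] by (auto simp: h2_lmis_def)
  thus ?thesis
    using h2_lmis_imp_lyapunov_certificate[OF assms] pd_matrix_inv
    unfolding informative_H2_def by blast
qed

lemma h2_lmis_imp_robust_performance:
  assumes lmis: "h2_lmis P11 P12 P22 Xp Xm Um C D \<gamma> Y Z L \<alpha> \<beta>" and "\<gamma> > 0"
    and AB: "(A, B) \<in> Sigma_set P11 P12 P22 Xp Xm Um"
  defines "K \<equiv> L ** matrix_inv Y"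
  shows "schur_stable (A + B ** K) \<and> summable (h2_sq_terms (A + B ** K) (C + D ** K)) \<and>
         h2_norm (A + B ** K) (C + D ** K) < \<gamma>"
proof -
  have Y: "pd Y" "trace (matrix_inv Y) < \<gamma>\<^sup>2"
    using lmis trace_matrix_inv_le[of Y Z] by (auto simp: h2_lmis_def)
  note cert = lyapunov_certificate[OF pd_matrix_inv[OF Y(1)]
      h2_lmis_imp_lyapunov_certificate[OF lmis AB, folded K_def]]
  have "sqrt (\<Sum>k. h2_sq_terms (A + B ** K) (C + D ** K) k) < sqrt (\<gamma>\<^sup>2)"
    using cert(3) Y(2) by (intro real_sqrt_less_mono) linarith
  thus ?thesis using cert(1,2) \<open>\<gamma> > 0\<close> by (simp add: h2_norm_def)
qed

section \<open>Interpolation by systems consistent with the data\<close>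

lemma Sigma_set_add_outer:
  assumes AB: "(A, B) \<in> Sigma_set P11 P12 P22 Xp Xm Um"
    and ker: "transpose Xm *v u1 + transpose Um *v u2 = 0"
  shows "(A + outer c u1, B + outer c u2) \<in> Sigma_set P11 P12 P22 Xp Xm Um"
proof -
  obtain W where Xp: "Xp = A ** Xm + B ** Um + W" and W: "noise_ok P11 P12 P22 W"
    using AB by (auto simp: Sigma_set_def)
  have "outer c u1 ** Xm + outer c u2 ** Um = 0"
    by (simp add: outer_matrix_mult outer_add_right ker)
  hence "Xp = (A + outer c u1) ** Xm + (B + outer c u2) ** Um + W"
    by (simp add: Xp matrix_add_rdistrib algebra_simps)
  thus ?thesis using W by (auto simp: Sigma_set_def)
qed

lemma closed_loop_add_outer_mult:
  "(A + outer c u1 + (B + outer c u2) ** K) *v v = (A + B ** K) *v v + ((u1 + transpose K *v u2) \<bullet> v) *\<^sub>R c"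
  by (simp add: matrix_add_rdistrib outer_matrix_mult matrix_vector_mult_add_rdistrib outer_mult
      inner_add_left algebra_simps scaleR_add_left)

locale consistent_noise_model =
  fixes Phi11 :: "real^'n^'n" and Phi12 :: "real^'T^'n" and Phi22 :: "real^'T^'T"
    and Xp Xm :: "real^'T^'n" and Um :: "real^'T^'m"
    and A0 :: "real^'n^'n" and B0 :: "real^'m^'n"
  assumes Phi11_sym: "transpose Phi11 = Phi11"
    and Phi22_sym: "transpose Phi22 = Phi22"
    and Phi22_neg: "pd (- Phi22)"
    and data: "(A0, B0) \<in> Sigma_set Phi11 Phi12 Phi22 Xp Xm Um"
begin

abbreviation "Phi \<equiv> Phi_mat Phi11 Phi12 Phi22"
abbreviation "consistent \<equiv> Sigma_set Phi11 Phi12 Phi22 Xp Xm Um"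

definition data_matrix :: "real^'T^('n + 'm)" where
  "data_matrix = vcat Xm Um"

text \<open>\<open>residual x u\<close> is \<open>[x; W\<^sup>T x]\<close> for the noise \<open>W = X\<^sub>+ - A X\<^sub>- - B U\<^sub>-\<close> of any \<open>(A, B)\<close>
  with \<open>[A\<^sup>T x; B\<^sup>T x] = u\<close>.\<close>

definition residual :: "real^'n \<Rightarrow> real^('n + 'm) \<Rightarrow> real^('n + 'T)" where
  "residual x u = vjoin x (transpose Xp *v x - transpose data_matrix *v u)"

definition phi_form :: "real^('n + 'T) \<Rightarrow> real" where
  "phi_form h = h \<bullet> (Phi *v h)"

lemma Phi_sym: "transpose Phi = Phi"
  by (rule Phi_mat_sym[OF Phi11_sym Phi22_sym])

lemma Phi22_form_neg: "s \<noteq> 0 \<Longrightarrow> s \<bullet> (Phi22 *v s) < 0"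
  using Phi22_neg unfolding pd_def by (simp add: uminus_matrix_vector_mult)

lemma data_matrix_transpose_mult:
  "transpose data_matrix *v vjoin u1 u2 = transpose Xm *v u1 + transpose Um *v u2"
  by (simp add: data_matrix_def transpose_vcat hcat_mult_vjoin)

lemma phi_form_add: "phi_form (a + b) = phi_form a + 2 * (a \<bullet> (Phi *v b)) + phi_form b"
  using inner_matrix_sym[OF Phi_sym, of b a]
  by (simp add: phi_form_def matrix_vector_right_distrib inner_add_left inner_add_right)

lemma phi_form_scaleR: "phi_form (c *\<^sub>R h) = c\<^sup>2 * phi_form h"
  by (simp add: phi_form_def matrix_vector_mult_scaleR power2_eq_square)

lemma phi_form_input_le: "phi_form (vjoin 0 s) \<le> 0"
  using Phi22_form_neg[of s] by (cases "s = 0") (auto simp: phi_form_def Phi_mat_mult_vjoin)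

lemma phi_form_input_eq_0: "phi_form (vjoin 0 s) = 0 \<Longrightarrow> s = 0"
  using Phi22_form_neg[of s] by (auto simp: phi_form_def Phi_mat_mult_vjoin)

lemma residual_add: "residual x (u + e) = residual x u + vjoin 0 (- (transpose data_matrix *v e))"
  by (simp add: residual_def matrix_vector_right_distrib vjoin_add algebra_simps)

lemma residual_Sigma_set:
  assumes "(A, B) \<in> consistent"
  shows "0 \<le> phi_form (residual x (vjoin (transpose A *v x) (transpose B *v x)))"
proof -
  obtain W where Xp: "Xp = A ** Xm + B ** Um + W" and W: "noise_ok Phi11 Phi12 Phi22 W"
    using assms by (auto simp: Sigma_set_def)
  have "residual x (vjoin (transpose A *v x) (transpose B *v x)) = vjoin x (transpose W *v x)"
    unfolding residual_def by (simp add: data_matrix_transpose_mult Xp block_simps)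
  thus ?thesis using noise_ok_quadratic_form[OF W] by (simp add: phi_form_def)
qed

lemma data_multiplier_residual_form:
  "vjoin x (vjoin u1 (vjoin u2 (vjoin y z))) \<bullet>
     (data_multiplier Phi11 Phi12 Phi22 Xp Xm Um *v vjoin x (vjoin u1 (vjoin u2 (vjoin y z))))
   = phi_form (residual x (vjoin u1 u2))"
  by (simp add: data_multiplier_form residual_def data_matrix_transpose_mult phi_form_def
      algebra_simps Let_def)

lemma residual_inner_input_direction:
  "residual \<xi> (Z *v \<xi>) \<bullet> (Phi *v vjoin 0 (transpose data_matrix *v e))
   = e \<bullet> ((data_matrix ** (transpose Phi12 + Phi22 ** transpose Xp
                               - Phi22 ** transpose data_matrix ** Z)) *v \<xi>)"
proof -
  define S s where "S = data_matrix" and "s = transpose data_matrix *v e"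
  have "residual \<xi> (Z *v \<xi>) \<bullet> (Phi *v vjoin 0 s)
        = \<xi> \<bullet> (Phi12 *v s) + (transpose Xp *v \<xi>) \<bullet> (Phi22 *v s)
          - (transpose S *v (Z *v \<xi>)) \<bullet> (Phi22 *v s)"
    by (simp add: residual_def S_def Phi_mat_mult_vjoin inner_diff_left)
  also have "\<dots> = s \<bullet> (transpose Phi12 *v \<xi>) + s \<bullet> (Phi22 *v (transpose Xp *v \<xi>))
                   - s \<bullet> (Phi22 *v (transpose S *v (Z *v \<xi>)))"
    using inner_transpose_mult[of s Phi12 \<xi>] inner_matrix_sym[OF Phi22_sym, of "transpose Xp *v \<xi>" s]
      inner_matrix_sym[OF Phi22_sym, of "transpose S *v (Z *v \<xi>)" s]
    by (simp add: inner_commute)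
  also have "\<dots> = e \<bullet> ((S ** (transpose Phi12 + Phi22 ** transpose Xp - Phi22 ** transpose S ** Z)) *v \<xi>)"
  proof -
    have "(transpose S *v e) \<bullet> w = e \<bullet> (S *v w)" for w
      by (metis inner_commute inner_transpose_mult)
    thus ?thesis
      by (simp add: s_def S_def block_simps matrix_vector_right_distrib matrix_vector_mult_diff_distrib
          inner_diff_right inner_add_right)
  qed
  finally show ?thesis by (simp add: s_def S_def)
qed

text \<open>The normal equations \<open>S \<Phi>\<^sub>2\<^sub>2 S\<^sup>T Z\<^sub>c = S R\<close> are solvable because \<open>\<Phi>\<^sub>2\<^sub>2 < 0\<close> gives
  \<open>S \<Phi>\<^sub>2\<^sub>2 S\<^sup>T\<close> the same kernel as \<open>S\<^sup>T\<close>.\<close>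

lemma central_solution_exists:
  obtains Zc :: "real^'n^('n + 'm)"
  where "\<And>\<xi> e. residual \<xi> (Zc *v \<xi>) \<bullet> (Phi *v vjoin 0 (transpose data_matrix *v e)) = 0"
proof -
  define S where "S = data_matrix"
  define R where "R = transpose Phi12 + Phi22 ** transpose Xp"
  define M where "M = S ** Phi22 ** transpose S"
  have symM: "transpose M = M"
    unfolding M_def using transpose_congruence[OF Phi22_sym, of "transpose S"] by simp
  have "transpose (S ** R) *v d = 0" if "M *v d = 0" for d
  proof -
    have "(transpose S *v d) \<bullet> (Phi22 *v (transpose S *v d)) = 0"
      using that quadratic_form_congruence_transpose[of d S Phi22] by (simp add: M_def)
    hence "transpose S *v d = 0" using Phi22_form_neg by fastforce
    thus ?thesis by (simp add: matrix_transpose_mul matrix_matrix_vector_assoc)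
  qed
  then obtain Zc where "M ** Zc = S ** R" using sym_matrix_solvable_matrix[OF symM] by blast
  hence "S ** (R - Phi22 ** transpose S ** Zc) = 0"
    by (simp add: M_def matrix_diff_ldistrib matrix_mul_assoc)
  hence "residual \<xi> (Zc *v \<xi>) \<bullet> (Phi *v vjoin 0 (transpose data_matrix *v e)) = 0" for \<xi> e
    unfolding residual_inner_input_direction by (simp add: S_def R_def)
  thus ?thesis using that by blast
qed

context
  fixes Zc :: "real^'n^('n + 'm)"
  assumes Zc: "\<And>\<xi> e. residual \<xi> (Zc *v \<xi>) \<bullet> (Phi *v vjoin 0 (transpose data_matrix *v e)) = 0"
begin

lemma phi_form_residual_central:
  "phi_form (residual \<xi> (Zc *v \<xi> + e))
     = phi_form (residual \<xi> (Zc *v \<xi>)) + phi_form (vjoin 0 (- (transpose data_matrix *v e)))"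
  using Zc[of \<xi> "- e"] by (simp add: residual_add phi_form_add matrix_vector_mult_uminus_right)

lemma phi_form_residual_central_nonneg: "0 \<le> phi_form (residual \<xi> (Zc *v \<xi>))"
proof -
  define u where "u = vjoin (transpose A0 *v \<xi>) (transpose B0 *v \<xi>)"
  have "0 \<le> phi_form (residual \<xi> (Zc *v \<xi> + (u - Zc *v \<xi>)))"
    using residual_Sigma_set[OF data] by (simp add: u_def)
  thus ?thesis
    unfolding phi_form_residual_central
    using phi_form_input_le[of "- (transpose data_matrix *v (u - Zc *v \<xi>))"] by linarith
qed

end

text \<open>The central solution is corrected by a rank-one term \<open>e a\<^sup>T\<close> with \<open>a\<^sup>T x = 1\<close>.\<close>

lemma exists_interpolating_matrix:
  assumes "x \<noteq> 0" and hx: "0 \<le> phi_form (residual x u)"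
  obtains Z :: "real^'n^('n + 'm)" where "Z *v x = u" "\<And>\<xi>. 0 \<le> phi_form (residual \<xi> (Z *v \<xi>))"
proof -
  obtain Zc where Zc: "\<And>\<xi> e. residual \<xi> (Zc *v \<xi>) \<bullet> (Phi *v vjoin 0 (transpose data_matrix *v e)) = 0"
    using central_solution_exists by blast
  note split = phi_form_residual_central[OF Zc]
  define H where "H = vcat (mat 1) (transpose Xp - transpose data_matrix ** Zc)"
  define G where "G = transpose H ** Phi ** H"
  have "H *v \<xi> = residual \<xi> (Zc *v \<xi>)" for \<xi>
    by (simp add: H_def vcat_mult residual_def block_simps)
  hence G: "\<xi> \<bullet> (G *v \<xi>) = phi_form (residual \<xi> (Zc *v \<xi>))" for \<xi>
    by (simp only: G_def quadratic_form_congruence phi_form_def)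
  have symG: "transpose G = G" unfolding G_def by (rule transpose_congruence[OF Phi_sym])
  have G_nonneg: "0 \<le> \<xi> \<bullet> (G *v \<xi>)" for \<xi>
    unfolding G by (rule phi_form_residual_central_nonneg[OF Zc])
  define e where "e = u - Zc *v x"
  define \<nu> where "\<nu> = phi_form (vjoin 0 (- (transpose data_matrix *v e)))"
  have "\<nu> \<le> 0" by (simp add: \<nu>_def phi_form_input_le)
  moreover have "0 \<le> x \<bullet> (G *v x) + \<nu>" using hx split[of x e] G[of x] by (simp add: e_def \<nu>_def)
  ultimately obtain a where "a \<bullet> x = 1" and a: "\<And>\<xi>. 0 \<le> \<xi> \<bullet> (G *v \<xi>) + (a \<bullet> \<xi>)\<^sup>2 * \<nu>"
    using quadratic_form_rank_one_update[OF symG G_nonneg \<open>x \<noteq> 0\<close>] by blast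
  define Z where "Z = Zc + outer e a"
  have Z: "Z *v \<xi> = Zc *v \<xi> + (a \<bullet> \<xi>) *\<^sub>R e" for \<xi>
    by (simp add: Z_def matrix_vector_mult_add_rdistrib outer_mult)
  have "Z *v x = u" by (simp add: Z \<open>a \<bullet> x = 1\<close> e_def)
  moreover have "phi_form (residual \<xi> (Z *v \<xi>)) = \<xi> \<bullet> (G *v \<xi>) + (a \<bullet> \<xi>)\<^sup>2 * \<nu>" for \<xi>
    using phi_form_scaleR[of "a \<bullet> \<xi>" "vjoin 0 (- (transpose data_matrix *v e))"]
    by (simp add: Z split G \<nu>_def vjoin_scaleR matrix_vector_mult_scaleR)
  ultimately show ?thesis using that a by simp
qed

lemma Sigma_set_interpolation:
  assumes "x \<noteq> 0" and "0 \<le> phi_form (residual x (vjoin u1 u2))"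
  obtains A B where "(A, B) \<in> consistent" "transpose A *v x = u1" "transpose B *v x = u2"
proof -
  obtain Z :: "real^'n^('n + 'm)" where Zx: "Z *v x = vjoin u1 u2"
    and Z: "\<And>\<xi>. 0 \<le> phi_form (residual \<xi> (Z *v \<xi>))"
    using exists_interpolating_matrix[OF assms] by blast
  define A :: "real^'n^'n" where "A = transpose (\<chi> i j. Z $ Inl i $ j)"
  define B :: "real^'m^'n" where "B = transpose (\<chi> i j. Z $ Inr i $ j)"
  have Z_split: "Z *v \<xi> = vjoin (transpose A *v \<xi>) (transpose B *v \<xi>)" for \<xi>
    by (simp add: vec_eq_iff A_def B_def matrix_vector_mult_def vjoin_def split: sum.split)
  define W where "W = Xp - A ** Xm - B ** Um"
  have "vcat (mat 1) (transpose W) *v \<xi> = residual \<xi> (Z *v \<xi>)" for \<xi>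
    by (simp add: W_def Z_split residual_def data_matrix_transpose_mult vcat_mult block_simps)
  hence "noise_ok Phi11 Phi12 Phi22 W"
    using Z transpose_congruence[OF Phi_sym, of "vcat (mat 1) (transpose W)"]
    by (simp add: noise_ok_def psd_def quadratic_form_congruence phi_form_def)
  hence "(A, B) \<in> consistent" by (auto simp: Sigma_set_def W_def intro!: exI[of _ W])
  moreover have "transpose A *v x = u1" "transpose B *v x = u2" using Zx by (simp_all add: Z_split)
  ultimately show ?thesis using that by blast
qed

end

section \<open>Necessity of the LMIs\<close>

lemma output_block_inverse_pd:
  fixes P :: "real^'n^'n" and C :: "real^'n^'p" and D :: "real^'m^'p" and K :: "real^'n^'m"
  assumes P: "pd P"
    and out: "\<And>\<xi>. \<xi> \<noteq> 0 \<Longrightarrow> ((C + D ** K) *v \<xi>) \<bullet> ((C + D ** K) *v \<xi>) < \<xi> \<bullet> (P *v \<xi>)"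
  shows "pd (output_block (matrix_inv P) ((C + D ** K) ** matrix_inv P))"
  unfolding pd_def
proof (intro conjI allI impI)
  show "transpose (output_block (matrix_inv P) ((C + D ** K) ** matrix_inv P))
        = output_block (matrix_inv P) ((C + D ** K) ** matrix_inv P)"
    by (simp add: output_block_def transpose_vcat transpose_hcat hcat_vcat pd_matrix_inv_sym[OF P])
  fix v :: "real^('n + 'p)" assume "v \<noteq> 0"
  obtain a b where v: "v = vjoin a b" by (metis vjoin_vfst_vsnd)
  define \<xi> c where "\<xi> = matrix_inv P *v a" and "c = (C + D ** K) *v \<xi>"
  have "a \<bullet> (matrix_inv P *v a) = \<xi> \<bullet> (P *v \<xi>)"
    by (simp add: \<xi>_def pd_matrix_inv_cancel[OF P] inner_commute)
  hence form: "v \<bullet> (output_block (matrix_inv P) ((C + D ** K) ** matrix_inv P) *v v)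
               = (\<xi> \<bullet> (P *v \<xi>) - c \<bullet> c) + (b + c) \<bullet> (b + c)"
    unfolding v by (subst output_block_feedback_form[where c = c]) (simp_all add: c_def \<xi>_def)
  show "0 < v \<bullet> (output_block (matrix_inv P) ((C + D ** K) ** matrix_inv P) *v v)"
  proof (cases "\<xi> = 0")
    case False
    thus ?thesis using out[OF False] inner_ge_zero[of "b + c"] unfolding form c_def by linarith
  next
    case True
    hence "a = 0" "c = 0" using pd_matrix_inv_cancel(1)[OF P, of a] by (simp_all add: \<xi>_def c_def)
    hence "b \<noteq> 0" using \<open>v \<noteq> 0\<close> v by simp
    thus ?thesis unfolding form using True \<open>c = 0\<close> by simp
  qed
qed

lemma coupling_block_inverse_psd:
  fixes P :: "real^'n^'n"
  assumes P: "pd P"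
  shows "psd (coupling_block P (matrix_inv P))"
  unfolding psd_def
proof (intro conjI allI)
  show "transpose (coupling_block P (matrix_inv P)) = coupling_block P (matrix_inv P)"
    using P by (simp add: coupling_block_def transpose_vcat transpose_hcat hcat_vcat pd_matrix_inv_sym pd_def)
  fix v :: "real^('n + 'n)"
  obtain a b where v: "v = vjoin a b" by (metis vjoin_vfst_vsnd)
  have "(matrix_inv P *v b) \<bullet> (P *v a) = a \<bullet> b"
    using inner_matrix_sym[of P "matrix_inv P *v b" a] P by (simp add: pd_def pd_matrix_inv_cancel)
  hence "v \<bullet> (coupling_block P (matrix_inv P) *v v)
         = (a + matrix_inv P *v b) \<bullet> (P *v (a + matrix_inv P *v b))"
    unfolding v coupling_block_form
    by (simp add: matrix_vector_right_distrib inner_add_left inner_add_right pd_matrix_inv_cancel[OF P]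
        inner_commute)
  thus "0 \<le> v \<bullet> (coupling_block P (matrix_inv P) *v v)" using pd_quadratic_form_nonneg[OF P] by simp
qed

locale informative_controller = consistent_noise_model Phi11 Phi12 Phi22 Xp Xm Um A0 B0
  for Phi11 :: "real^'n^'n" and Phi12 :: "real^'T^'n" and Phi22 :: "real^'T^'T"
    and Xp Xm :: "real^'T^'n" and Um :: "real^'T^'m" and A0 B0 +
  fixes C :: "real^'n^'p" and D :: "real^'m^'p" and P :: "real^'n^'n" and K :: "real^'n^'m"
  assumes pdP: "pd P"
    and certificate: "\<And>A B. (A, B) \<in> consistent \<Longrightarrow>
          pd (P - transpose (A + B ** K) ** P ** (A + B ** K) - transpose (C + D ** K) ** (C + D ** K))"
begin

lemma symP: "transpose P = P"
  using pdP by (simp add: pd_def)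

lemma lyapunov_decrease:
  assumes "(A, B) \<in> consistent" "\<xi> \<noteq> 0"
  shows "((A + B ** K) *v \<xi>) \<bullet> (P *v ((A + B ** K) *v \<xi>)) + ((C + D ** K) *v \<xi>) \<bullet> ((C + D ** K) *v \<xi>)
         < \<xi> \<bullet> (P *v \<xi>)"
  using certificate[OF assms(1)] assms(2) unfolding pd_lyapunov_iff[OF symP] by blast

lemma output_decrease:
  assumes "\<xi> \<noteq> 0"
  shows "((C + D ** K) *v \<xi>) \<bullet> ((C + D ** K) *v \<xi>) < \<xi> \<bullet> (P *v \<xi>)"
  using lyapunov_decrease[OF data assms] pd_quadratic_form_nonneg[OF pdP, of "(A0 + B0 ** K) *v \<xi>"] by linarith

text \<open>Inputs invisible in the data can be fed to a consistent system along any direction, so the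
  controller must annihilate them: otherwise the two systems \<open>(A\<^sub>0, B\<^sub>0) \<plusminus> c [u\<^sub>1; u\<^sub>2]\<^sup>T\<close>
  would both have to decrease \<open>V(x) = x\<^sup>T P x\<close>, which forces \<open>V((A\<^sub>0 + B\<^sub>0 K) v) < 0\<close>.\<close>

lemma feedback_annihilates_data_kernel:
  assumes ker: "transpose Xm *v u1 + transpose Um *v u2 = 0"
  shows "u1 + transpose K *v u2 = 0"
proof (rule ccontr)
  define v where "v = u1 + transpose K *v u2"
  assume "u1 + transpose K *v u2 \<noteq> 0"
  hence "v \<noteq> 0" by (simp add: v_def)
  define a where "a = (A0 + B0 ** K) *v v"
  have shifted: "(a + s *\<^sub>R v) \<bullet> (P *v (a + s *\<^sub>R v)) < v \<bullet> (P *v v)" for s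
  proof -
    define c where "c = (s / (v \<bullet> v)) *\<^sub>R v"
    have AB: "(A0 + outer c u1, B0 + outer c u2) \<in> consistent"
      by (rule Sigma_set_add_outer[OF data ker])
    have closed_loop: "(A0 + outer c u1 + (B0 + outer c u2) ** K) *v v = a + s *\<^sub>R v"
      using \<open>v \<noteq> 0\<close> by (simp add: closed_loop_add_outer_mult a_def c_def flip: v_def)
    show ?thesis
      using lyapunov_decrease[OF AB \<open>v \<noteq> 0\<close>, unfolded closed_loop]
        inner_ge_zero[of "(C + D ** K) *v v"] by linarith
  qed
  have "(a + 1 *\<^sub>R v) \<bullet> (P *v (a + 1 *\<^sub>R v)) + (a + (-1) *\<^sub>R v) \<bullet> (P *v (a + (-1) *\<^sub>R v))
        = 2 * (a \<bullet> (P *v a)) + 2 * (v \<bullet> (P *v v))"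
    by (simp add: matrix_vector_right_distrib matrix_vector_mult_uminus_right inner_add_left inner_add_right
        algebra_simps)
  hence "a \<bullet> (P *v a) < 0" using shifted[of 1] shifted[of "-1"] by linarith
  thus False using pd_quadratic_form_nonneg[OF pdP, of a] by simp
qed

definition Y :: "real^'n^'n" where "Y = matrix_inv P"
definition L :: "real^'n^'m" where "L = K ** Y"

lemma symY: "transpose Y = Y"
  by (simp add: Y_def pd_matrix_inv_sym[OF pdP])

lemma P_Y_cancel: "P *v (Y *v x) = x" "Y *v (P *v x) = x"
  by (simp_all add: Y_def pd_matrix_inv_cancel[OF pdP])

abbreviation "Mdata \<equiv> data_multiplier Phi11 Phi12 Phi22 Xp Xm Um :: real^('n + ('n + ('m + ('n + 'p))))^_"
abbreviation "LMI0 \<equiv> LMI_block Y L C D 0"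

lemma LMI0_form:
  "vjoin x (vjoin u1 (vjoin u2 (vjoin y z))) \<bullet> (LMI0 *v vjoin x (vjoin u1 (vjoin u2 (vjoin y z))))
   = x \<bullet> (Y *v x) + 2 * ((u1 + transpose K *v u2) \<bullet> (Y *v y)) + (Y *v y) \<bullet> (P *v (Y *v y))
     + 2 * (z \<bullet> ((C + D ** K) *v (Y *v y))) + z \<bullet> z"
  unfolding L_def LMI_block_feedback_form[OF symY] by (simp add: P_Y_cancel inner_commute)

lemma LMI0_form_pos_state:
  assumes "x \<noteq> 0" and "0 \<le> phi_form (residual x (vjoin u1 u2))"
  shows "0 < vjoin x (vjoin u1 (vjoin u2 (vjoin y z))) \<bullet> (LMI0 *v vjoin x (vjoin u1 (vjoin u2 (vjoin y z))))"
proof -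
  obtain A B where AB: "(A, B) \<in> consistent" and u: "transpose A *v x = u1" "transpose B *v x = u2"
    using Sigma_set_interpolation[OF assms] by blast
  define \<eta> \<xi> where "\<eta> = Y *v x" and "\<xi> = Y *v y"
  define a c where "a = (A + B ** K) *v \<xi>" and "c = (C + D ** K) *v \<xi>"
  have x: "x = P *v \<eta>" by (simp add: \<eta>_def P_Y_cancel)
  have "(u1 + transpose K *v u2) \<bullet> \<xi> = a \<bullet> x"
    unfolding u[symmetric] closed_loop_transpose_mult a_def by (metis inner_commute inner_transpose_mult)
  also have "\<dots> = \<eta> \<bullet> (P *v a)"
    unfolding x using inner_matrix_sym[OF symP, of \<eta> a] by (simp add: inner_commute)
  finally have "(u1 + transpose K *v u2) \<bullet> \<xi> = \<eta> \<bullet> (P *v a)" .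
  moreover have "x \<bullet> (Y *v x) = \<eta> \<bullet> (P *v \<eta>)"
    unfolding \<eta>_def[symmetric] by (subst (1) x) (rule inner_commute)
  ultimately have form: "vjoin x (vjoin u1 (vjoin u2 (vjoin y z))) \<bullet> (LMI0 *v vjoin x (vjoin u1 (vjoin u2 (vjoin y z))))
    = (\<eta> + a) \<bullet> (P *v (\<eta> + a)) + (\<xi> \<bullet> (P *v \<xi>) - a \<bullet> (P *v a) - c \<bullet> c) + (z + c) \<bullet> (z + c)"
    unfolding LMI0_form \<xi>_def[symmetric] c_def[symmetric]
    using inner_matrix_sym[OF symP, of a \<eta>]
    by (simp add: matrix_vector_right_distrib inner_add_left inner_add_right inner_commute[of c z]
        algebra_simps)
  show ?thesis
  proof (cases "\<xi> = 0")
    case False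
    thus ?thesis unfolding form
      using lyapunov_decrease[OF AB False, folded a_def c_def] pd_quadratic_form_nonneg[OF pdP, of "\<eta> + a"]
        inner_ge_zero[of "z + c"] by linarith
  next
    case True
    have "\<eta> \<noteq> 0" using \<open>x \<noteq> 0\<close> P_Y_cancel(1)[of x] by (auto simp: \<eta>_def)
    hence "0 < \<eta> \<bullet> (P *v \<eta>)" using pdP by (simp add: pd_def)
    thus ?thesis unfolding form using True by (simp add: a_def c_def add_pos_nonneg)
  qed
qed

lemma LMI0_form_input:
  fixes y :: "real^'n" and z :: "real^'p"
  assumes "0 \<le> phi_form (residual 0 (vjoin u1 u2))"
  defines "\<xi> \<equiv> Y *v y" and "c \<equiv> (C + D ** K) *v (Y *v y)"
  shows "transpose Xm *v u1 + transpose Um *v u2 = 0"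
    and "vjoin 0 (vjoin u1 (vjoin u2 (vjoin y z))) \<bullet> (LMI0 *v vjoin 0 (vjoin u1 (vjoin u2 (vjoin y z))))
         = (\<xi> \<bullet> (P *v \<xi>) - c \<bullet> c) + (z + c) \<bullet> (z + c)"
proof -
  have "phi_form (vjoin 0 (- (transpose Xm *v u1 + transpose Um *v u2))) \<ge> 0"
    using assms(1) by (simp add: residual_def data_matrix_transpose_mult)
  hence "phi_form (vjoin 0 (- (transpose Xm *v u1 + transpose Um *v u2))) = 0"
    using phi_form_input_le[of "- (transpose Xm *v u1 + transpose Um *v u2)"] by linarith
  hence "- (transpose Xm *v u1 + transpose Um *v u2) = 0" by (rule phi_form_input_eq_0)
  thus ker: "transpose Xm *v u1 + transpose Um *v u2 = 0" by (rule neg_equal_0_iff_equal[THEN iffD1])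
  show "vjoin 0 (vjoin u1 (vjoin u2 (vjoin y z))) \<bullet> (LMI0 *v vjoin 0 (vjoin u1 (vjoin u2 (vjoin y z))))
         = (\<xi> \<bullet> (P *v \<xi>) - c \<bullet> c) + (z + c) \<bullet> (z + c)"
    unfolding LMI0_form feedback_annihilates_data_kernel[OF ker] c_def[symmetric]
    unfolding \<xi>_def[symmetric]
    by (simp add: inner_add_left inner_add_right inner_commute[of c z] algebra_simps)
qed

definition common_kernel :: "(real^('n + ('n + ('m + ('n + 'p))))) set" where
  "common_kernel = {k. LMI0 *v k = 0 \<and> transpose (M5 Xp Xm Um :: real^_^('n + ('n + ('m + ('n + 'p))))) *v k = 0}"

lemma LMI0_form_pos:
  assumes "0 \<le> w \<bullet> (Mdata *v w)" and "w \<noteq> 0" and "\<forall>k\<in>common_kernel. w \<bullet> k = 0"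
  shows "0 < w \<bullet> (LMI0 *v w)"
proof -
  obtain x u1 u2 y z where w: "w = vjoin x (vjoin u1 (vjoin u2 (vjoin y z)))" by (rule vjoin5_cases)
  have hx: "0 \<le> phi_form (residual x (vjoin u1 u2))"
    using assms(1) unfolding w data_multiplier_residual_form .
  show ?thesis
  proof (cases "x = 0")
    case False thus ?thesis unfolding w by (rule LMI0_form_pos_state[OF _ hx])
  next
    case True
    note input = LMI0_form_input[OF hx[unfolded True]]
    consider "Y *v y \<noteq> 0" | "y = 0" "z \<noteq> 0" | "y = 0" "z = 0"
      using P_Y_cancel(1)[of y] by force
    thus ?thesis
    proof cases
      case 1
      thus ?thesis unfolding w True input(2)
        using output_decrease[OF 1] inner_ge_zero[of "z + (C + D ** K) *v (Y *v y)"] by linarith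
    next
      case 2 thus ?thesis unfolding w True input(2) by simp
    next
      case 3
      have "transpose Y *v u1 + transpose (K ** Y) *v u2 = Y *v (u1 + transpose K *v u2)"
        by (simp add: symY matrix_transpose_mul matrix_matrix_vector_assoc matrix_vector_right_distrib)
      hence "Y *v u1 + transpose (K ** Y) *v u2 = 0"
        by (simp add: feedback_annihilates_data_kernel[OF input(1)] symY)
      moreover have "transpose Xm *v u1 = - (transpose Um *v u2)"
        using input(1) by (simp add: eq_neg_iff_add_eq_0)
      ultimately have "w \<in> common_kernel"
        using LMI_block_mult[of Y L C D 0 0 u1 u2 0 0]
          M5_transpose_mult[of Xp Xm Um 0 u1 u2 "0::real^'n" "0::real^'p"]
        unfolding w True 3 common_kernel_def L_def by simp
      hence "w \<bullet> w = 0" using assms(3) by blast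
      thus ?thesis using \<open>w \<noteq> 0\<close> by simp
    qed
  qed
qed

lemma LMI0_margin:
  obtains m where "m > 0" "\<And>w. 0 \<le> w \<bullet> (Mdata *v w) \<Longrightarrow> m * (norm (vfst w))\<^sup>2 \<le> w \<bullet> (LMI0 *v w)"
proof -
  have "subspace common_kernel"
    by (simp add: subspace_def common_kernel_def matrix_vector_right_distrib matrix_vector_mult_scaleR)
  moreover have "LMI0 *v k = 0" "Mdata *v k = 0" "vfst k = 0" if "k \<in> common_kernel" for k
  proof -
    show "LMI0 *v k = 0" "Mdata *v k = 0"
      using that by (simp_all add: common_kernel_def data_multiplier_def matrix_matrix_vector_assoc)
    obtain x u1 u2 y z where "k = vjoin x (vjoin u1 (vjoin u2 (vjoin y z)))" by (rule vjoin5_cases)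
    thus "vfst k = 0" using that by (simp add: common_kernel_def M5_transpose_mult)
  qed
  ultimately show ?thesis
    by (rule quadratic_form_margin[OF LMI_block_sym[OF symY] data_multiplier_sym[OF Phi11_sym Phi22_sym]
          _ _ _ _ linear_vfst norm_vfst_le LMI0_form_pos that])
qed

lemma data_slater_point:
  assumes "pd (transpose (vcat (mat 1) Zb) ** N_mat Phi11 Phi12 Phi22 Xp Xm Um ** vcat (mat 1) Zb)"
  obtains w where "0 < w \<bullet> (Mdata *v w)"
proof -
  define \<xi> :: "real^'n" where "\<xi> = axis undefined 1"
  define w :: "real^('n + ('n + ('m + ('n + 'p))))"
    where "w = vjoin \<xi> (vjoin (vfst (Zb *v \<xi>)) (vjoin (vsnd (Zb *v \<xi>)) (vjoin 0 0)))"
  have "w \<bullet> (Mdata *v w) = phi_form (residual \<xi> (Zb *v \<xi>))"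
    unfolding w_def data_multiplier_residual_form by (simp add: vjoin_vfst_vsnd)
  also have "residual \<xi> (Zb *v \<xi>) = transpose (N_data_left Xp Xm Um) *v (vcat (mat 1) Zb *v \<xi>)"
    using data_matrix_transpose_mult[of "vfst (Zb *v \<xi>)" "vsnd (Zb *v \<xi>)"]
      N_data_left_transpose_mult[of Xp Xm Um \<xi> "vfst (Zb *v \<xi>)" "vsnd (Zb *v \<xi>)"]
    by (simp add: residual_def vcat_mult vjoin_vfst_vsnd algebra_simps)
  finally have "\<xi> \<bullet> ((transpose (vcat (mat 1) Zb) ** N_mat Phi11 Phi12 Phi22 Xp Xm Um ** vcat (mat 1) Zb) *v \<xi>)
                = w \<bullet> (Mdata *v w)"
    by (simp add: phi_form_def N_mat_def quadratic_form_congruence quadratic_form_congruence_transpose)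
  moreover have "\<xi> \<noteq> 0" by (simp add: \<xi>_def)
  ultimately show ?thesis using assms that unfolding pd_def by metis
qed

text \<open>Subtracting the margin \<open>m \<parallel>x\<parallel>\<^sup>2\<close> produces the LMI with \<open>\<beta> = m\<close> that is still nonnegative on
  the cone cut out by the data, and the S-lemma supplies the multiplier \<open>\<alpha>\<close>.\<close>

lemma h2_lmis_exist:
  assumes Zbar: "pd (transpose (vcat (mat 1) Zb) ** N_mat Phi11 Phi12 Phi22 Xp Xm Um ** vcat (mat 1) Zb)"
    and trace: "trace P < \<gamma>\<^sup>2"
  shows "\<exists>Y Z L \<alpha> \<beta>. h2_lmis Phi11 Phi12 Phi22 Xp Xm Um C D \<gamma> Y Z L \<alpha> \<beta>"
proof -
  obtain w0 where w0: "0 < w0 \<bullet> (Mdata *v w0)" using data_slater_point[OF Zbar] by blast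
  have out: "pd (output_block Y (C ** Y + D ** L))"
  proof -
    have CY: "C ** Y + D ** L = (C + D ** K) ** Y"
      by (simp add: L_def matrix_add_rdistrib matrix_mul_assoc)
    show ?thesis unfolding CY unfolding Y_def by (rule output_block_inverse_pd[OF pdP output_decrease])
  qed
  show ?thesis
  proof (rule LMI0_margin)
    fix m :: real
    assume m: "m > 0" and margin: "\<And>w. 0 \<le> w \<bullet> (Mdata *v w) \<Longrightarrow> m * (norm (vfst w))\<^sup>2 \<le> w \<bullet> (LMI0 *v w)"
    have cone: "0 \<le> w \<bullet> (LMI_block Y L C D m *v w)" if "0 \<le> w \<bullet> (Mdata *v w)" for w
      using margin[OF that] unfolding LMI_block_form_scaled_identity[of w Y L C D m]
      by (simp add: power2_norm_eq_inner)
    show ?thesis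
    proof (rule s_lemma[OF LMI_block_sym[OF symY] data_multiplier_sym[OF Phi11_sym Phi22_sym] cone w0])
      fix \<alpha> :: real
      assume "\<alpha> \<ge> 0" and "\<And>w. \<alpha> * (w \<bullet> (Mdata *v w)) \<le> w \<bullet> (LMI_block Y L C D m *v w)"
      hence "psd (LMI_block Y L C D m - \<alpha> *\<^sub>R Mdata)"
        by (intro psd_diff_scaledI LMI_block_sym[OF symY] data_multiplier_sym[OF Phi11_sym Phi22_sym])
      hence "h2_lmis Phi11 Phi12 Phi22 Xp Xm Um C D \<gamma> Y P L \<alpha> m"
        using pd_matrix_inv[OF pdP, folded Y_def] symP \<open>\<alpha> \<ge> 0\<close> m out trace
          coupling_block_inverse_psd[OF pdP, folded Y_def]
        unfolding h2_lmis_def by blast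
      thus ?thesis by blast
    qed
  qed
qed

end

theorem theorem8:
  fixes Phi11 :: "real^'n^'n" and Phi12 :: "real^'T^'n" and Phi22 :: "real^'T^'T"
    and Xp Xm :: "real^'T^'n" and Um :: "real^'T^'m"
    and C :: "real^'n^'p" and D :: "real^'m^'p" and \<gamma> :: real
  assumes Phi11_sym: "transpose Phi11 = Phi11"
    and Phi22_sym: "transpose Phi22 = Phi22"
    and Phi22_neg: "pd (- Phi22)"
    and data: "\<exists>(As :: real^'n^'n) (Bs :: real^'m^'n) Wm.
                 Xp = As ** Xm + Bs ** Um + Wm \<and> noise_ok Phi11 Phi12 Phi22 Wm"
    and Zbar: "\<exists>Zb :: real^'n^('n + 'm).
                 pd (transpose (vcat (mat 1) Zb) ** N_mat Phi11 Phi12 Phi22 Xp Xm Um ** vcat (mat 1) Zb)"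
    and gamma_pos: "\<gamma> > 0"
  shows "(informative_H2 Phi11 Phi12 Phi22 Xp Xm Um C D \<gamma> \<longleftrightarrow>
          (\<exists>(Y :: real^'n^'n) (Z :: real^'n^'n) (L :: real^'n^'m) (\<alpha> :: real) (\<beta> :: real).
             pd Y \<and> transpose Z = Z \<and> \<alpha> \<ge> 0 \<and> \<beta> > 0 \<and>
             psd (LMI_block Y L C D \<beta> - \<alpha> *\<^sub>R (M5 Xp Xm Um ** Phi_mat Phi11 Phi12 Phi22 ** transpose (M5 Xp Xm Um :: real^_^('n + ('n + ('m + ('n + 'p))))))) \<and>
             pd (vcat (hcat Y (transpose (C ** Y + D ** L))) (hcat (C ** Y + D ** L) (mat 1))) \<and>
             psd (vcat (hcat Z (mat 1)) (hcat (mat 1) Y)) \<and>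
             trace Z < \<gamma>\<^sup>2))
       \<and> (\<forall>(Y :: real^'n^'n) (Z :: real^'n^'n) (L :: real^'n^'m) (\<alpha> :: real) (\<beta> :: real).
             pd Y \<and> transpose Z = Z \<and> \<alpha> \<ge> 0 \<and> \<beta> > 0 \<and>
             psd (LMI_block Y L C D \<beta> - \<alpha> *\<^sub>R (M5 Xp Xm Um ** Phi_mat Phi11 Phi12 Phi22 ** transpose (M5 Xp Xm Um :: real^_^('n + ('n + ('m + ('n + 'p))))))) \<and>
             pd (vcat (hcat Y (transpose (C ** Y + D ** L))) (hcat (C ** Y + D ** L) (mat 1))) \<and>
             psd (vcat (hcat Z (mat 1)) (hcat (mat 1) Y)) \<and>
             trace Z < \<gamma>\<^sup>2
           \<longrightarrow> (let K = L ** matrix_inv Y in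
                 \<forall>(A, B) \<in> Sigma_set Phi11 Phi12 Phi22 Xp Xm Um.
                   schur_stable (A + B ** K) \<and>
                   summable (h2_sq_terms (A + B ** K) (C + D ** K)) \<and>
                   h2_norm (A + B ** K) (C + D ** K) < \<gamma>))"
proof -
  obtain As Bs where "(As, Bs) \<in> Sigma_set Phi11 Phi12 Phi22 Xp Xm Um"
    using data by (auto simp: Sigma_set_def)
  then interpret consistent_noise_model Phi11 Phi12 Phi22 Xp Xm Um As Bs
    using Phi11_sym Phi22_sym Phi22_neg by unfold_locales
  have "informative_H2 Phi11 Phi12 Phi22 Xp Xm Um C D \<gamma> \<longleftrightarrow>
        (\<exists>Y Z L \<alpha> \<beta>. h2_lmis Phi11 Phi12 Phi22 Xp Xm Um C D \<gamma> Y Z L \<alpha> \<beta>)"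
  proof
    assume "informative_H2 Phi11 Phi12 Phi22 Xp Xm Um C D \<gamma>"
    then obtain P K where "pd P" "trace P < \<gamma>\<^sup>2" and "\<forall>(A, B) \<in> consistent.
        pd (P - transpose (A + B ** K) ** P ** (A + B ** K) - transpose (C + D ** K) ** (C + D ** K))"
      unfolding informative_H2_def by blast
    then interpret informative_controller Phi11 Phi12 Phi22 Xp Xm Um As Bs C D P K
      by unfold_locales blast+
    show "\<exists>Y Z L \<alpha> \<beta>. h2_lmis Phi11 Phi12 Phi22 Xp Xm Um C D \<gamma> Y Z L \<alpha> \<beta>"
      using Zbar h2_lmis_exist \<open>trace P < \<gamma>\<^sup>2\<close> by blast
  qed (use h2_lmis_imp_informative in blast)
  moreover have "\<forall>Y Z L \<alpha> \<beta>. h2_lmis Phi11 Phi12 Phi22 Xp Xm Um C D \<gamma> Y Z L \<alpha> \<beta> \<longrightarrow>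
      (let K = L ** matrix_inv Y in \<forall>(A, B) \<in> consistent.
         schur_stable (A + B ** K) \<and> summable (h2_sq_terms (A + B ** K) (C + D ** K)) \<and>
         h2_norm (A + B ** K) (C + D ** K) < \<gamma>)"
    unfolding Let_def using h2_lmis_imp_robust_performance[OF _ gamma_pos] by blast
  ultimately show ?thesis
    unfolding h2_lmis_def data_multiplier_def output_block_def coupling_block_def by (rule conjI)
qed

end
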